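(* Let $(\theta_t)_{t\in\mathbb R}$ be a smooth green path, $t_0\in\mathbb R$, and $M\in\mathcal G$ nonzero. Let $M=M_0\supsetneq M_1\supsetneq\cdots\supsetneq M_m=0$ be a chain of strict subobjects of $M$ with $M_{k-1}/M_k\in\mathcal W(\theta_{t_k})$ for real numbers $t_1>t_2>\cdots>t_m$ (such a chain exists and is unique). Then $M\in\mathcal P(\theta_{t_0})$ if and only if $t_k<t_0$ for all $k$, i.e. if and only if $t_1<t_0$.
   Context: Let $\Lambda$ be a finite dimensional algebra over a field with $n$ isoclasses of simple modules, and $\mathrm{mod}\text-\Lambda$ the category of finitely generated right $\Lambda$-modules. Fix a torsion class $\mathcal G\subseteq\mathrm{mod}\text-\Lambda$ (closed under isomorphisms, extensions and quotients). For $B\in\mathcal G$, a subobject of $B$ is a submodule in $\mathcal G$; a subobject $A\subseteq B$ is strict if $A\cap B'\in\mathcal G$ for every subobject $B'$ of $B$; a strict quotient of $B$ is $B/A$ with $A$ a strict subobject. Let $V_\Lambda=\mathrm{Hom}_{\mathbb Z}(K_0\Lambda,\mathbb R)\cong\mathbb R^n$; $\theta(M)$ denotes $\theta$ applied to the dimension vector of $M$. For $M\in\mathcal G$, $D_{\mathcal G}(M)$ is the set of $\theta$ with $\theta(M)=0$ and $\theta(M')\le0$ for every strict subobject $M'$ of $M$; $\mathcal W(\theta)$ is the class of $X\in\mathcal G$ with $\theta\in D_{\mathcal G}(X)$. $\mathcal P(\theta)$ is the class consisting of $0$ and all nonzero $M\in\mathcal G$ with $\theta(M'')>0$ for every nonzero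 strict quotient $M''$ of $M$ (including $M''=M$). A smooth green path is a smooth map $t\mapsto\theta_t$, $\mathbb R\to V_\Lambda$, such that: (1) whenever $\theta_{t_0}\in D_{\mathcal G}(M)$ for some nonzero $M\in\mathcal G$, $\frac{d}{dt}\theta_t(M)|_{t=t_0}>0$; (2) there is $T$ such that $\theta_t(M)>0$ for all $t>T$ and all nonzero $M\in\mathcal G$; (3) there is $T'$ such that $\theta_t(M)<0$ for all $t<T'$ and all nonzero $M\in\mathcal G$. *)

theory Defs
  imports "HOL-Analysis.Analysis"
begin

definition fd_algebra :: "('k::field \<Rightarrow> 'l::ring_1) \<Rightarrow> bool" where
  "fd_algebra \<iota> \<longleftrightarrow>
     \<iota> 1 = 1 \<and> (\<forall>a b. \<iota> (a + b) = \<iota> a + \<iota> b) \<and> (\<forall>a b. \<iota> (a * b) = \<iota> a * \<iota> b) \<and>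
     (\<forall>c x. \<iota> c * x = x * \<iota> c) \<and>
     (\<exists>bs :: 'l list. \<forall>x. \<exists>cs :: 'k list. length cs = length bs \<and>
                         x = (\<Sum>i<length bs. \<iota> (cs ! i) * bs ! i))"

text \<open>Every finitely generated right Lambda-module is finite dimensional over K,
  hence isomorphic to one whose underlying K-vector space is K^d, realised as the
  functions nat => 'k vanishing from d on.  Such a module is given by d and the
  right action rho, with rho l v meaning v.l .\<close>

type_synonym ('k, 'l) rmod = "nat \<times> ('l \<Rightarrow> (nat \<Rightarrow> 'k) \<Rightarrow> (nat \<Rightarrow> 'k))"

definition vzero :: "nat \<Rightarrow> 'k::zero" where "vzero = (\<lambda>_. 0)"
definition vadd :: "(nat \<Rightarrow> 'k::plus) \<Rightarrow> (nat \<Rightarrow> 'k) \<Rightarrow> (nat \<Rightarrow> 'k)" where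
  "vadd v w = (\<lambda>i. v i + w i)"

definition mcar :: "('k::zero, 'l) rmod \<Rightarrow> (nat \<Rightarrow> 'k) set" where
  "mcar M = {v. \<forall>i\<ge>fst M. v i = 0}"

definition act :: "('k, 'l) rmod \<Rightarrow> 'l \<Rightarrow> (nat \<Rightarrow> 'k) \<Rightarrow> (nat \<Rightarrow> 'k)" where
  "act M = snd M"

definition is_rmod :: "('k::field \<Rightarrow> 'l::ring_1) \<Rightarrow> ('k, 'l) rmod \<Rightarrow> bool" where
  "is_rmod \<iota> M \<longleftrightarrow>
     (\<forall>l. \<forall>v\<in>mcar M. act M l v \<in> mcar M) \<and>
     (\<forall>l. \<forall>v\<in>mcar M. \<forall>w\<in>mcar M. act M l (vadd v w) = vadd (act M l v) (act M l w)) \<and>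
     (\<forall>l l'. \<forall>v\<in>mcar M. act M (l + l') v = vadd (act M l v) (act M l' v)) \<and>
     (\<forall>l l'. \<forall>v\<in>mcar M. act M (l * l') v = act M l' (act M l v)) \<and>
     (\<forall>v\<in>mcar M. act M 1 v = v) \<and>
     (\<forall>c. \<forall>v\<in>mcar M. act M (\<iota> c) v = (\<lambda>i. c * v i))"

definition is_submod :: "('k::field, 'l::ring_1) rmod \<Rightarrow> (nat \<Rightarrow> 'k) set \<Rightarrow> bool" where
  "is_submod M U \<longleftrightarrow> U \<subseteq> mcar M \<and> vzero \<in> U \<and>
     (\<forall>u\<in>U. \<forall>w\<in>U. vadd u w \<in> U) \<and> (\<forall>l. \<forall>u\<in>U. act M l u \<in> U)"

text \<open>For submodules A of B of M, sec_iso iota M B A N says that the universe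
  module N is isomorphic to the subquotient B/A (via a surjective module map
  from B onto N with kernel A).\<close>

definition sec_iso :: "('k::field \<Rightarrow> 'l::ring_1) \<Rightarrow> ('k, 'l) rmod \<Rightarrow> (nat \<Rightarrow> 'k) set
     \<Rightarrow> (nat \<Rightarrow> 'k) set \<Rightarrow> ('k, 'l) rmod \<Rightarrow> bool" where
  "sec_iso \<iota> M B A N \<longleftrightarrow> is_rmod \<iota> N \<and>
     (\<exists>f. f ` B = mcar N \<and>
          (\<forall>v\<in>B. \<forall>w\<in>B. f (vadd v w) = vadd (f v) (f w)) \<and>
          (\<forall>l. \<forall>v\<in>B. f (act M l v) = act N l (f v)) \<and>
          {v\<in>B. f v = vzero} = A)"

definition mod_iso :: "('k::field \<Rightarrow> 'l::ring_1) \<Rightarrow> ('k, 'l) rmod \<Rightarrow> ('k, 'l) rmod \<Rightarrow> bool" where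
  "mod_iso \<iota> M N \<longleftrightarrow> sec_iso \<iota> M (mcar M) {vzero} N"

definition nonzero_mod :: "('k::zero, 'l) rmod \<Rightarrow> bool" where
  "nonzero_mod M \<longleftrightarrow> mcar M \<noteq> {vzero}"

definition torsion_class :: "('k::field \<Rightarrow> 'l::ring_1) \<Rightarrow> ('k, 'l) rmod set \<Rightarrow> bool" where
  "torsion_class \<iota> G \<longleftrightarrow>
     (\<forall>M\<in>G. is_rmod \<iota> M) \<and>
     (\<forall>M N. M \<in> G \<longrightarrow> mod_iso \<iota> M N \<longrightarrow> N \<in> G) \<and>
     (\<forall>M U N. M \<in> G \<longrightarrow> is_submod M U \<longrightarrow> sec_iso \<iota> M (mcar M) U N \<longrightarrow> N \<in> G) \<and>
     (\<forall>M U X Y. is_rmod \<iota> M \<longrightarrow> is_submod M U \<longrightarrow> X \<in> G \<longrightarrow> Y \<in> G \<longrightarrow>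
         sec_iso \<iota> M U {vzero} X \<longrightarrow> sec_iso \<iota> M (mcar M) U Y \<longrightarrow> M \<in> G)"

text \<open>B/A lies in G (G is isomorphism closed).\<close>
definition sq_in :: "('k::field \<Rightarrow> 'l::ring_1) \<Rightarrow> ('k, 'l) rmod set \<Rightarrow> ('k, 'l) rmod
     \<Rightarrow> (nat \<Rightarrow> 'k) set \<Rightarrow> (nat \<Rightarrow> 'k) set \<Rightarrow> bool" where
  "sq_in \<iota> G M B A \<longleftrightarrow> (\<exists>N. N \<in> G \<and> sec_iso \<iota> M B A N)"

text \<open>A homomorphism K_0(mod Lambda) -> R is the same as a real valued function
  on modules that is invariant under isomorphism and additive on short exact
  sequences; theta(M) is its value on the class [M] (the dimension vector).\<close>

definition in_V :: "('k::field \<Rightarrow> 'l::ring_1) \<Rightarrow> (('k, 'l) rmod \<Rightarrow> real) \<Rightarrow> bool" where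
  "in_V \<iota> \<theta> \<longleftrightarrow>
     (\<forall>M N. is_rmod \<iota> M \<longrightarrow> mod_iso \<iota> M N \<longrightarrow> \<theta> M = \<theta> N) \<and>
     (\<forall>M U X Y. is_rmod \<iota> M \<longrightarrow> is_submod M U \<longrightarrow>
         sec_iso \<iota> M U {vzero} X \<longrightarrow> sec_iso \<iota> M (mcar M) U Y \<longrightarrow> \<theta> M = \<theta> X + \<theta> Y)"

definition theta_sec :: "('k::field \<Rightarrow> 'l::ring_1) \<Rightarrow> (('k, 'l) rmod \<Rightarrow> real) \<Rightarrow> ('k, 'l) rmod
     \<Rightarrow> (nat \<Rightarrow> 'k) set \<Rightarrow> (nat \<Rightarrow> 'k) set \<Rightarrow> real" where
  "theta_sec \<iota> \<theta> M B A = \<theta> (SOME N. sec_iso \<iota> M B A N)"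

definition subobj :: "('k::field \<Rightarrow> 'l::ring_1) \<Rightarrow> ('k, 'l) rmod set \<Rightarrow> ('k, 'l) rmod
     \<Rightarrow> (nat \<Rightarrow> 'k) set \<Rightarrow> bool" where
  "subobj \<iota> G X A \<longleftrightarrow> is_submod X A \<and> sq_in \<iota> G X A {vzero}"

definition strict_subobj :: "('k::field \<Rightarrow> 'l::ring_1) \<Rightarrow> ('k, 'l) rmod set \<Rightarrow> ('k, 'l) rmod
     \<Rightarrow> (nat \<Rightarrow> 'k) set \<Rightarrow> bool" where
  "strict_subobj \<iota> G X A \<longleftrightarrow> subobj \<iota> G X A \<and>
     (\<forall>B'. subobj \<iota> G X B' \<longrightarrow> sq_in \<iota> G X (A \<inter> B') {vzero})"

definition DG :: "('k::field \<Rightarrow> 'l::ring_1) \<Rightarrow> ('k, 'l) rmod set \<Rightarrow> ('k, 'l) rmod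
     \<Rightarrow> (('k, 'l) rmod \<Rightarrow> real) set" where
  "DG \<iota> G X = {\<theta>. \<theta> X = 0 \<and>
     (\<forall>A. strict_subobj \<iota> G X A \<longrightarrow> theta_sec \<iota> \<theta> X A {vzero} \<le> 0)}"

definition WG :: "('k::field \<Rightarrow> 'l::ring_1) \<Rightarrow> ('k, 'l) rmod set \<Rightarrow> (('k, 'l) rmod \<Rightarrow> real)
     \<Rightarrow> ('k, 'l) rmod set" where
  "WG \<iota> G \<theta> = {X. X \<in> G \<and> \<theta> \<in> DG \<iota> G X}"

definition PG :: "('k::field \<Rightarrow> 'l::ring_1) \<Rightarrow> ('k, 'l) rmod set \<Rightarrow> (('k, 'l) rmod \<Rightarrow> real)
     \<Rightarrow> ('k, 'l) rmod set" where
  "PG \<iota> G \<theta> = {X. (is_rmod \<iota> X \<and> \<not> nonzero_mod X) \<or>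
     (X \<in> G \<and> nonzero_mod X \<and>
      (\<forall>A. strict_subobj \<iota> G X A \<longrightarrow> A \<noteq> mcar X \<longrightarrow> theta_sec \<iota> \<theta> X (mcar X) A > 0))}"

definition smooth_real :: "(real \<Rightarrow> real) \<Rightarrow> bool" where
  "smooth_real f \<longleftrightarrow> (\<exists>D :: nat \<Rightarrow> real \<Rightarrow> real. D 0 = f \<and>
      (\<forall>n t. (D n has_real_derivative D (Suc n) t) (at t)))"

text \<open>Smoothness of t -> theta_t into V_Lambda (= R^n) is smoothness of every
  coordinate t -> theta_t(M).\<close>
definition smooth_green_path :: "('k::field \<Rightarrow> 'l::ring_1) \<Rightarrow> ('k, 'l) rmod set
     \<Rightarrow> (real \<Rightarrow> ('k, 'l) rmod \<Rightarrow> real) \<Rightarrow> bool" where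
  "smooth_green_path \<iota> G \<theta> \<longleftrightarrow>
     (\<forall>t. in_V \<iota> (\<theta> t)) \<and>
     (\<forall>M. is_rmod \<iota> M \<longrightarrow> smooth_real (\<lambda>t. \<theta> t M)) \<and>
     (\<forall>t0 M. M \<in> G \<longrightarrow> nonzero_mod M \<longrightarrow> \<theta> t0 \<in> DG \<iota> G M \<longrightarrow>
         deriv (\<lambda>t. \<theta> t M) t0 > 0) \<and>
     (\<exists>T. \<forall>t>T. \<forall>M\<in>G. nonzero_mod M \<longrightarrow> \<theta> t M > 0) \<and>
     (\<exists>T'. \<forall>t<T'. \<forall>M\<in>G. nonzero_mod M \<longrightarrow> \<theta> t M < 0)"

end

(*
  For a proper strict subobject A of M, the function t \<mapsto> theta_t(M/A) can only cross
  zero upwards along a green path. Indeed, by induction on the codimension of A, at a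
  zero t > s every larger proper strict subobject P already has theta_t(M/P) \<ge> 0, so every
  strict subobject P/A of M/A has theta_t(P/A) = theta_t(M/A) - theta_t(M/P) \<le> 0; thus
  theta_t lies in D(M/A) and the green condition makes the derivative positive. Hence,
  if all strict quotients of M are nonnegative at time s, the proper ones are positive
  at every later time.

  If M lies in P(theta_t0) but t_1 \<ge> t0, this makes theta_(t_1)(M/M_1) positive, although
  M/M_1 lies in W(theta_(t_1)). Conversely, if all t_k < t0 and A is a proper strict
  subobject, pick k with M_k \<subseteq> A but not M_(k-1) \<subseteq> A. Then
  theta_t0(M/A) = theta_t0(M/(M_(k-1) + A)) + theta_t0(M_(k-1)/(M_(k-1) \<inter> A)); the first
  term is nonnegative by induction on k, and the second is positive because it is a
  proper strict quotient of M_(k-1)/M_k, whose strict quotients are nonnegative at t_k.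
*)

theory Submission
  imports Defs "HOL-Library.Function_Algebras"
begin

section \<open>Subspaces of finitely supported vectors\<close>

definition vscale :: "'k::field \<Rightarrow> (nat \<Rightarrow> 'k) \<Rightarrow> (nat \<Rightarrow> 'k)" where
  "vscale c v = (\<lambda>i. c * v i)"

interpretation kvec: vector_space "vscale :: 'k::field \<Rightarrow> (nat \<Rightarrow> 'k) \<Rightarrow> (nat \<Rightarrow> 'k)"
  by unfold_locales (auto simp: vscale_def fun_eq_iff algebra_simps)

lemma vadd_eq_plus [simp]: "vadd v w = v + w"
  by (simp add: vadd_def fun_eq_iff)

lemma vzero_eq_zero [simp]: "vzero = 0"
  by (simp add: vzero_def fun_eq_iff)

definition kspace :: "nat \<Rightarrow> (nat \<Rightarrow> 'k::zero) set" where
  "kspace d = {v. \<forall>i\<ge>d. v i = 0}"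

lemma mcar_kspace: "mcar M = kspace (fst M)"
  by (simp add: mcar_def kspace_def)

lemma zero_in_kspace [simp]: "0 \<in> kspace d"
  by (simp add: kspace_def)

lemma zero_in_mcar [simp]: "0 \<in> mcar M"
  by (simp add: mcar_kspace)

lemma subspace_kspace: "kvec.subspace (kspace d)"
  by (auto simp: kvec.subspace_def kspace_def vscale_def)

definition unit_vec :: "nat \<Rightarrow> nat \<Rightarrow> 'k::field" where
  "unit_vec i = (\<lambda>j. if j = i then 1 else 0)"

lemma fun_sum_apply: "(sum f A) x = (\<Sum>a\<in>A. f a x)"
  by (induction A rule: infinite_finite_induct) auto

lemma kspace_subset_span: "kspace d \<subseteq> kvec.span (unit_vec ` {..<d})"
proof
  fix v :: "nat \<Rightarrow> 'k::field" assume v: "v \<in> kspace d"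
  have "v = (\<Sum>i<d. vscale (v i) (unit_vec i))"
  proof
    fix j
    have "(\<Sum>i<d. vscale (v i) (unit_vec i)) j = (\<Sum>i<d. if i = j then v i else 0)"
      unfolding fun_sum_apply vscale_def unit_vec_def by (rule sum.cong) auto
    also have "\<dots> = v j" using v by (cases "j < d") (auto simp: kspace_def)
    finally show "v j = (\<Sum>i<d. vscale (v i) (unit_vec i)) j" by simp
  qed
  also have "\<dots> \<in> kvec.span (unit_vec ` {..<d})"
    by (intro kvec.span_sum kvec.span_scale kvec.span_base) auto
  finally show "v \<in> kvec.span (unit_vec ` {..<d})" .
qed

lemma independent_in_kspace_finite:
  assumes "kvec.independent S" "S \<subseteq> kspace d"
  shows "finite S"
  using kvec.independent_span_bound[of "unit_vec ` {..<d}" S] assms kspace_subset_span by blast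

lemma dim_kspace_le:
  fixes A :: "(nat \<Rightarrow> 'k::field) set"
  assumes "A \<subseteq> kspace d"
  shows "kvec.dim A \<le> d"
proof -
  have "kvec.dim A \<le> card (unit_vec ` {..<d} :: (nat \<Rightarrow> 'k) set)"
    using assms kspace_subset_span by (intro kvec.dim_le_card) auto
  also have "\<dots> \<le> d" using card_image_le[of "{..<d}" unit_vec] by simp
  finally show ?thesis .
qed

lemma dim_psubset_kspace:
  assumes A: "kvec.subspace A" and AA': "A \<subset> A'" and A'd: "A' \<subseteq> kspace d"
  shows "kvec.dim A < kvec.dim A'"
proof -
  obtain BA where BA: "BA \<subseteq> A" "kvec.independent BA" "A \<subseteq> kvec.span BA"
    using kvec.maximal_independent_subset[of A] by blast
  obtain BB where BB: "BA \<subseteq> BB" "BB \<subseteq> A'" "kvec.independent BB" "A' \<subseteq> kvec.span BB"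
    using kvec.maximal_independent_subset_extend[of BA A'] BA AA' by blast
  have "finite BB" using independent_in_kspace_finite BB A'd by blast
  moreover have "BA \<noteq> BB"
  proof
    assume "BA = BB"
    then have "A' \<subseteq> A" using BB(4) kvec.span_subspace[OF BA(1,3) A] by simp
    then show False using AA' by blast
  qed
  ultimately have "card BA < card BB" using BB(1) by (meson psubsetI psubset_card_mono)
  moreover have "card BA = kvec.dim A" by (rule kvec.basis_card_eq_dim[OF BA(1,3,2)])
  moreover have "card BB = kvec.dim A'" by (rule kvec.basis_card_eq_dim[OF BB(2,4,3)])
  ultimately show ?thesis by simp
qed

definition coords :: "(nat \<Rightarrow> 'k::field) set \<Rightarrow> (nat \<Rightarrow> nat \<Rightarrow> 'k) \<Rightarrow> nat
     \<Rightarrow> (nat \<Rightarrow> 'k) \<Rightarrow> (nat \<Rightarrow> 'k)" where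
  "coords BB \<phi> e v = (\<lambda>i. if i < e then kvec.representation BB v (\<phi> i) else 0)"

lemma coords_in_kspace: "coords BB \<phi> e v \<in> kspace e"
  by (simp add: coords_def kspace_def)

lemma coords_add:
  "kvec.independent BB \<Longrightarrow> v \<in> kvec.span BB \<Longrightarrow> w \<in> kvec.span BB \<Longrightarrow>
    coords BB \<phi> e (v + w) = coords BB \<phi> e v + coords BB \<phi> e w"
  by (auto simp: coords_def kvec.representation_add fun_eq_iff)

lemma coords_scale:
  assumes "kvec.independent BB" "v \<in> kvec.span BB"
  shows "coords BB \<phi> e (vscale c v) = vscale c (coords BB \<phi> e v)"
proof -
  have "kvec.representation BB (vscale c v) = (\<lambda>b. c * kvec.representation BB v b)"
    using kvec.representation_scale[OF assms] .
  then show ?thesis by (simp add: coords_def vscale_def fun_eq_iff)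
qed

lemma coords_eq_0_iff:
  assumes BB: "kvec.independent BB" and BA: "BA \<subseteq> BB"
    and \<phi>: "bij_betw \<phi> {..<e} (BB - BA)" and v: "v \<in> kvec.span BB"
  shows "coords BB \<phi> e v = 0 \<longleftrightarrow> v \<in> kvec.span BA"
proof
  assume "coords BB \<phi> e v = 0"
  have "kvec.representation BB v c = 0" if c: "c \<in> BB - BA" for c
  proof -
    obtain i where "i < e" "c = \<phi> i" using \<phi> c by (auto simp: bij_betw_def)
    then have "kvec.representation BB v c = coords BB \<phi> e v i" by (simp add: coords_def)
    then show ?thesis using \<open>coords BB \<phi> e v = 0\<close> by simp
  qed
  then have sub: "{b. kvec.representation BB v b \<noteq> 0} \<subseteq> BA"
    using kvec.representation_ne_zero by blast
  have "v = (\<Sum>b | kvec.representation BB v b \<noteq> 0. vscale (kvec.representation BB v b) b)"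
    using kvec.sum_nonzero_representation_eq[OF BB v] by simp
  also have "\<dots> \<in> kvec.span BA"
    using sub by (intro kvec.span_sum kvec.span_scale kvec.span_base) blast
  finally show "v \<in> kvec.span BA" .
next
  assume "v \<in> kvec.span BA"
  then have "kvec.representation BB v = kvec.representation BA v"
    using kvec.representation_extend[OF BB _ BA] by blast
  then show "coords BB \<phi> e v = 0"
    using \<phi> kvec.representation_ne_zero[of BA v]
    by (fastforce simp: coords_def bij_betw_def fun_eq_iff)
qed

lemma coords_onto:
  assumes BB: "kvec.independent BB" and \<phi>: "bij_betw \<phi> {..<e} C" and C: "C \<subseteq> BB"
    and w: "w \<in> kspace e"
  shows "w \<in> coords BB \<phi> e ` kvec.span BB"
proof -
  have \<phi>BB: "\<phi> i \<in> BB" if "i < e" for i using \<phi> C that by (auto simp: bij_betw_def)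
  define v where "v = (\<Sum>i<e. vscale (w i) (\<phi> i))"
  have v: "v \<in> kvec.span BB"
    unfolding v_def using \<phi>BB by (intro kvec.span_sum kvec.span_scale kvec.span_base) blast
  have "kvec.representation BB v = (\<lambda>b. \<Sum>i<e. kvec.representation BB (vscale (w i) (\<phi> i)) b)"
    unfolding v_def
    by (rule kvec.representation_sum[OF BB]) (use \<phi>BB kvec.span_base kvec.span_scale in blast)
  also have "\<dots> = (\<lambda>b. \<Sum>i<e. if b = \<phi> i then w i else 0)"
    by (intro ext sum.cong refl)
      (simp add: \<phi>BB kvec.representation_scale[OF BB kvec.span_base] kvec.representation_basis[OF BB])
  finally have rep: "kvec.representation BB v = (\<lambda>b. \<Sum>i<e. if b = \<phi> i then w i else 0)" .
  have "coords BB \<phi> e v j = w j" for j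
  proof (cases "j < e")
    case True
    have "(\<Sum>i<e. if \<phi> j = \<phi> i then w i else 0) = (\<Sum>i<e. if i = j then w i else 0)"
      using \<phi> True by (intro sum.cong refl) (auto simp: bij_betw_def inj_on_def)
    then show ?thesis using True by (simp add: coords_def rep)
  qed (use w in \<open>simp add: coords_def kspace_def\<close>)
  then have "coords BB \<phi> e v = w" by (simp add: fun_eq_iff)
  then show ?thesis using v by blast
qed

lemma linear_quotient_exists:
  assumes A: "kvec.subspace A" and B: "kvec.subspace B" and AB: "A \<subseteq> B" and Bd: "B \<subseteq> kspace d"
  obtains e f where "f ` B = kspace e" "\<forall>v\<in>B. \<forall>w\<in>B. f (v + w) = f v + f w"
    "\<forall>c. \<forall>v\<in>B. f (vscale c v) = vscale c (f v)" "{v\<in>B. f v = 0} = A"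
proof -
  obtain BA where BA: "BA \<subseteq> A" "kvec.independent BA" "A \<subseteq> kvec.span BA"
    using kvec.maximal_independent_subset[of A] by blast
  obtain BB where BB: "BA \<subseteq> BB" "BB \<subseteq> B" "kvec.independent BB" "B \<subseteq> kvec.span BB"
    using kvec.maximal_independent_subset_extend[of BA B] BA AB by blast
  have spanBB: "kvec.span BB = B" using BB B kvec.span_subspace by blast
  have spanBA: "kvec.span BA = A" using BA A kvec.span_subspace by blast
  have "finite (BB - BA)" using independent_in_kspace_finite BB Bd by blast
  then obtain \<phi> where \<phi>: "bij_betw \<phi> {..<card (BB - BA)} (BB - BA)"
    using ex_bij_betw_nat_finite by (metis atLeast0LessThan)
  let ?f = "coords BB \<phi> (card (BB - BA))"
  have "?f ` B = kspace (card (BB - BA))"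
  proof
    show "?f ` B \<subseteq> kspace (card (BB - BA))" using coords_in_kspace by blast
    show "kspace (card (BB - BA)) \<subseteq> ?f ` B"
      using coords_onto[OF BB(3) \<phi>] spanBB by blast
  qed
  moreover have "\<forall>v\<in>B. \<forall>w\<in>B. ?f (v + w) = ?f v + ?f w"
    using coords_add[OF BB(3)] spanBB by blast
  moreover have "\<forall>c. \<forall>v\<in>B. ?f (vscale c v) = vscale c (?f v)"
    using coords_scale[OF BB(3)] spanBB by blast
  moreover have "{v\<in>B. ?f v = 0} = A"
    using coords_eq_0_iff[OF BB(3,1) \<phi>] spanBB spanBA AB by auto
  ultimately show ?thesis by (rule that)
qed

lemma is_submod_iff:
  "is_submod M U \<longleftrightarrow> U \<subseteq> mcar M \<and> 0 \<in> U \<and>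
     (\<forall>u\<in>U. \<forall>w\<in>U. u + w \<in> U) \<and> (\<forall>l. \<forall>u\<in>U. act M l u \<in> U)"
  by (simp add: is_submod_def)

locale rmodule =
  fixes \<iota> :: "'k::field \<Rightarrow> 'l::ring_1" and M :: "('k, 'l) rmod"
  assumes is_rmod: "is_rmod \<iota> M"
begin

lemma act_closed: "v \<in> mcar M \<Longrightarrow> act M l v \<in> mcar M"
  using is_rmod by (auto simp: is_rmod_def)

lemma act_add: "v \<in> mcar M \<Longrightarrow> w \<in> mcar M \<Longrightarrow> act M l (v + w) = act M l v + act M l w"
  using is_rmod by (auto simp: is_rmod_def)

lemma act_plus: "v \<in> mcar M \<Longrightarrow> act M (l + l') v = act M l v + act M l' v"
  using is_rmod by (auto simp: is_rmod_def)

lemma act_mult: "v \<in> mcar M \<Longrightarrow> act M (l * l') v = act M l' (act M l v)"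
  using is_rmod by (auto simp: is_rmod_def)

lemma act_one: "v \<in> mcar M \<Longrightarrow> act M 1 v = v"
  using is_rmod by (auto simp: is_rmod_def)

lemma act_scalar: "v \<in> mcar M \<Longrightarrow> act M (\<iota> c) v = vscale c v"
  using is_rmod by (auto simp: is_rmod_def vscale_def)

lemma act_zero [simp]: "act M l 0 = 0"
  using act_add[of 0 0 l] by simp

lemma act_diff: "v \<in> mcar M \<Longrightarrow> w \<in> mcar M \<Longrightarrow> act M l (v - w) = act M l v - act M l w"
proof -
  assume v: "v \<in> mcar M" and w: "w \<in> mcar M"
  then have "v - w \<in> mcar M" using kvec.subspace_diff[OF subspace_kspace] by (simp add: mcar_kspace)
  then show ?thesis using act_add[of "v - w" w l] w by (simp add: algebra_simps)
qed

lemma submod_scale: "is_submod M U \<Longrightarrow> u \<in> U \<Longrightarrow> vscale c u \<in> U"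
proof -
  assume "is_submod M U" "u \<in> U"
  then have "u \<in> mcar M" "act M (\<iota> c) u \<in> U" by (auto simp: is_submod_iff)
  then show "vscale c u \<in> U" using act_scalar by simp
qed

lemma submod_iff_subspace:
  "is_submod M U \<longleftrightarrow> U \<subseteq> mcar M \<and> kvec.subspace U \<and> (\<forall>l. \<forall>u\<in>U. act M l u \<in> U)"
proof
  assume "is_submod M U"
  then show "U \<subseteq> mcar M \<and> kvec.subspace U \<and> (\<forall>l. \<forall>u\<in>U. act M l u \<in> U)"
    using submod_scale unfolding kvec.subspace_def is_submod_iff by blast
qed (simp add: is_submod_iff kvec.subspace_def)

lemma submod_carrier: "is_submod M (mcar M)"
  using subspace_kspace act_closed by (auto simp: submod_iff_subspace mcar_kspace)

lemma submod_zero: "is_submod M {0}"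
  by (auto simp: submod_iff_subspace)

lemma submod_Int: "is_submod M U \<Longrightarrow> is_submod M V \<Longrightarrow> is_submod M (U \<inter> V)"
  by (auto simp: submod_iff_subspace kvec.subspace_inter)

lemma submod_diff: "is_submod M U \<Longrightarrow> u \<in> U \<Longrightarrow> w \<in> U \<Longrightarrow> u - w \<in> U"
  by (auto simp: submod_iff_subspace kvec.subspace_diff)

lemma set_plus_subset_submod: "is_submod M W \<Longrightarrow> U \<subseteq> W \<Longrightarrow> V \<subseteq> W \<Longrightarrow> U + V \<subseteq> W"
  unfolding is_submod_iff by (blast elim: set_plus_elim)

lemma subset_set_plus_submod1: "is_submod M V \<Longrightarrow> U \<subseteq> U + V"
  using set_plus_intro[of _ U 0 V] by (force simp: is_submod_iff)

lemma subset_set_plus_submod2: "is_submod M U \<Longrightarrow> V \<subseteq> U + V"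
  using subset_set_plus_submod1 by (metis add.commute)

lemma submod_set_plus: "is_submod M U \<Longrightarrow> is_submod M V \<Longrightarrow> is_submod M (U + V)"
proof -
  assume U: "is_submod M U" and V: "is_submod M V"
  have "kvec.subspace {u + v | u v. u \<in> U \<and> v \<in> V}"
    by (rule kvec.subspace_sums) (use U V in \<open>simp_all add: submod_iff_subspace\<close>)
  moreover have "U + V = {u + v | u v. u \<in> U \<and> v \<in> V}" by (auto simp: set_plus_def)
  ultimately have "kvec.subspace (U + V)" by simp
  moreover have "U + V \<subseteq> mcar M"
    using U V submod_carrier set_plus_subset_submod by (meson is_submod_iff)
  moreover have "act M l x \<in> U + V" if x: "x \<in> U + V" for l x
  proof -
    obtain a b where ab: "x = a + b" "a \<in> U" "b \<in> V" using x by (rule set_plus_elim)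
    then have "a \<in> mcar M" "b \<in> mcar M" "act M l a \<in> U" "act M l b \<in> V"
      using U V by (auto simp: is_submod_iff)
    then show ?thesis using ab act_add by (simp add: set_plus_intro)
  qed
  ultimately show ?thesis by (simp add: submod_iff_subspace)
qed

lemma codim_psubset_less:
  assumes A: "is_submod M A" and P: "is_submod M P" and AP: "A \<subset> P"
  shows "fst M - kvec.dim P < fst M - kvec.dim A"
proof -
  have "kvec.dim A < kvec.dim P" "kvec.dim P \<le> fst M"
    using dim_psubset_kspace[OF _ AP] dim_kspace_le A P by (auto simp: submod_iff_subspace mcar_kspace)
  then show ?thesis by simp
qed

lemma submod_modular:
  assumes Y: "is_submod M Y" and X: "is_submod M X" and XY: "X \<subseteq> Y"
  shows "Y \<inter> B + X = Y \<inter> (B + X)"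
proof
  show "Y \<inter> B + X \<subseteq> Y \<inter> (B + X)"
    using Y XY unfolding is_submod_iff by (blast elim: set_plus_elim)
  show "Y \<inter> (B + X) \<subseteq> Y \<inter> B + X"
  proof
    fix z assume z: "z \<in> Y \<inter> (B + X)"
    then obtain b x where "z = b + x" "b \<in> B" "x \<in> X" by (auto elim: set_plus_elim)
    moreover have "b = z - x" using \<open>z = b + x\<close> by simp
    then have "b \<in> Y" using submod_diff[OF Y] z \<open>x \<in> X\<close> XY by blast
    ultimately show "z \<in> Y \<inter> B + X" by blast
  qed
qed

lemma set_plus_Int_exchange:
  assumes X: "is_submod M X" and A: "is_submod M A" and B: "is_submod M B"
  shows "(X + A) \<inter> B + X = A \<inter> (B + X) + X"
proof -
  have "(X + A) \<inter> B + X = (X + A) \<inter> (B + X)"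
    using submod_modular[OF submod_set_plus[OF X A] X subset_set_plus_submod1[OF A]] .
  also have "\<dots> = (B + X) \<inter> (A + X)" by (simp add: add.commute Int_commute)
  also have "\<dots> = (B + X) \<inter> A + X"
    using submod_modular[OF submod_set_plus[OF B X] X subset_set_plus_submod2[OF B]] by simp
  finally show ?thesis by (simp add: Int_commute)
qed

end

section \<open>Subquotients and additive functions\<close>

(* theta_sec and sq_in see B/A only up to isomorphism; a presentation keeps the projection f,
   along which subobjects of B/A correspond to the submodules between A and B. *)
definition subquot_map :: "('k::field \<Rightarrow> 'l::ring_1) \<Rightarrow> ('k, 'l) rmod \<Rightarrow> (nat \<Rightarrow> 'k) set
     \<Rightarrow> (nat \<Rightarrow> 'k) set \<Rightarrow> ('k, 'l) rmod \<Rightarrow> ((nat \<Rightarrow> 'k) \<Rightarrow> (nat \<Rightarrow> 'k)) \<Rightarrow> bool" where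
  "subquot_map \<iota> M B A N f \<longleftrightarrow> is_rmod \<iota> N \<and> f ` B = mcar N \<and>
     (\<forall>v\<in>B. \<forall>w\<in>B. f (v + w) = f v + f w) \<and> (\<forall>l. \<forall>v\<in>B. f (act M l v) = act N l (f v)) \<and>
     {v\<in>B. f v = 0} = A"

lemma sec_iso_iff_subquot_map: "sec_iso \<iota> M B A N \<longleftrightarrow> (\<exists>f. subquot_map \<iota> M B A N f)"
  by (simp add: sec_iso_def subquot_map_def)

context
  fixes \<iota> :: "'k::field \<Rightarrow> 'l::ring_1" and M N :: "('k, 'l) rmod" and B A f
  assumes f: "subquot_map \<iota> M B A N f"
begin

lemma subquot_map_rmod: "is_rmod \<iota> N"
  using f by (simp add: subquot_map_def)

lemma subquot_map_image: "f ` B = mcar N"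
  using f by (simp add: subquot_map_def)

lemma subquot_map_in: "v \<in> B \<Longrightarrow> f v \<in> mcar N"
  using subquot_map_image by blast

lemma subquot_map_add: "v \<in> B \<Longrightarrow> w \<in> B \<Longrightarrow> f (v + w) = f v + f w"
  using f by (simp add: subquot_map_def)

lemma subquot_map_act: "v \<in> B \<Longrightarrow> f (act M l v) = act N l (f v)"
  using f by (simp add: subquot_map_def)

lemma subquot_map_kernel: "{v\<in>B. f v = 0} = A"
  using f by (simp add: subquot_map_def)

lemma subquot_map_kernel_subset: "A \<subseteq> B"
  using subquot_map_kernel by blast

end

lemma subquot_map_id: "is_rmod \<iota> M \<Longrightarrow> subquot_map \<iota> M (mcar M) {0} M id"
  using rmodule.act_closed by (auto simp: subquot_map_def rmodule_def)

context rmodule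
begin

context
  fixes B A N f
  assumes f: "subquot_map \<iota> M B A N f" and B: "is_submod M B"
begin

lemma subquot_map_zero: "f 0 = 0"
  using subquot_map_add[OF f, of 0 0] B by (simp add: is_submod_iff)

lemma subquot_map_diff: "v \<in> B \<Longrightarrow> w \<in> B \<Longrightarrow> f (v - w) = f v - f w"
  using subquot_map_add[OF f, of "v - w" w] submod_diff[OF B] by (simp add: algebra_simps)

lemma subquot_map_eq_iff: "v \<in> B \<Longrightarrow> w \<in> B \<Longrightarrow> f v = f w \<longleftrightarrow> v - w \<in> A"
  using subquot_map_diff subquot_map_kernel[OF f] submod_diff[OF B] by force

lemma subquot_map_image_kernel: "f ` A = {0}"
  using subquot_map_kernel[OF f] subquot_map_zero B by (force simp: is_submod_iff)

lemma subquot_map_kernel_submod: "is_submod M A"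
proof -
  have "A \<subseteq> B" "0 \<in> A" using subquot_map_kernel[OF f] subquot_map_zero B by (auto simp: is_submod_iff)
  moreover have "u + w \<in> A" if "u \<in> A" "w \<in> A" for u w
    using that subquot_map_kernel[OF f] subquot_map_add[OF f] B by (auto simp: is_submod_iff)
  moreover have "act M l u \<in> A" if "u \<in> A" for l u
    using that subquot_map_kernel[OF f] subquot_map_act[OF f] B
      rmodule.act_zero[OF rmodule.intro[OF subquot_map_rmod[OF f]]]
    by (auto simp: is_submod_iff)
  ultimately show ?thesis using B by (auto simp: is_submod_iff)
qed

lemma subquot_map_image_submod:
  assumes D: "is_submod M D" and DB: "D \<subseteq> B"
  shows "is_submod N (f ` D)"
  unfolding is_submod_iff
proof (intro conjI ballI allI)
  show "f ` D \<subseteq> mcar N" using subquot_map_image[OF f] DB by blast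
  show "0 \<in> f ` D" using D subquot_map_zero by (force simp: is_submod_iff)
next
  fix u w assume "u \<in> f ` D" "w \<in> f ` D"
  then obtain a b where ab: "a \<in> D" "b \<in> D" "u = f a" "w = f b" by blast
  then have "a + b \<in> D" using D by (simp add: is_submod_iff)
  then show "u + w \<in> f ` D" using ab DB subquot_map_add[OF f] by (metis image_eqI subsetD)
next
  fix l u assume "u \<in> f ` D"
  then obtain a where a: "a \<in> D" "u = f a" by blast
  then have "act M l a \<in> D" using D by (simp add: is_submod_iff)
  then show "act N l u \<in> f ` D" using a DB subquot_map_act[OF f] by (metis image_eqI subsetD)
qed

lemma subquot_map_restrict:
  assumes X: "X \<subseteq> B" and img: "f ` X = f ` B"
  shows "subquot_map \<iota> M X (X \<inter> A) N f"
  using f X img subquot_map_kernel[OF f] unfolding subquot_map_def by blast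

lemma image_set_plus_kernel:
  assumes Y: "Y \<subseteq> B"
  shows "f ` (Y + A) = f ` Y"
proof
  show "f ` (Y + A) \<subseteq> f ` Y"
  proof
    fix w assume "w \<in> f ` (Y + A)"
    then obtain y a where ya: "y \<in> Y" "a \<in> A" "w = f (y + a)" by (auto elim: set_plus_elim)
    then have "w = f y + f a" using subquot_map_add[OF f] Y subquot_map_kernel_subset[OF f] by blast
    moreover have "f a = 0" using subquot_map_kernel[OF f] ya by blast
    ultimately show "w \<in> f ` Y" using ya by simp
  qed
  show "f ` Y \<subseteq> f ` (Y + A)" using subset_set_plus_submod1[OF subquot_map_kernel_submod] by blast
qed

lemma subquot_map_preimage:
  assumes U: "is_submod N U"
  shows "is_submod M {v\<in>B. f v \<in> U}" "A \<subseteq> {v\<in>B. f v \<in> U}" "f ` {v\<in>B. f v \<in> U} = U"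
proof -
  show "is_submod M {v\<in>B. f v \<in> U}"
    unfolding is_submod_iff
  proof (intro conjI ballI allI)
    show "{v \<in> B. f v \<in> U} \<subseteq> mcar M" using B by (auto simp: is_submod_iff)
    show "0 \<in> {v \<in> B. f v \<in> U}" using B U subquot_map_zero by (simp add: is_submod_iff)
  next
    fix u w assume "u \<in> {v \<in> B. f v \<in> U}" "w \<in> {v \<in> B. f v \<in> U}"
    then show "u + w \<in> {v \<in> B. f v \<in> U}"
      using B U subquot_map_add[OF f] by (simp add: is_submod_iff)
  next
    fix l u assume "u \<in> {v \<in> B. f v \<in> U}"
    then show "act M l u \<in> {v \<in> B. f v \<in> U}"
      using B U subquot_map_act[OF f] by (simp add: is_submod_iff)
  qed
  show "A \<subseteq> {v\<in>B. f v \<in> U}"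
    using subquot_map_kernel[OF f] U by (auto simp: is_submod_iff)
  have "U \<subseteq> f ` B" using U subquot_map_image[OF f] by (simp add: is_submod_iff)
  then show "f ` {v\<in>B. f v \<in> U} = U" by blast
qed

end

lemma act_well_defined:
  fixes f :: "(nat \<Rightarrow> 'k) \<Rightarrow> (nat \<Rightarrow> 'k)"
  assumes A: "is_submod M A" and B: "is_submod M B"
    and add: "\<forall>v\<in>B. \<forall>w\<in>B. f (v + w) = f v + f w" and ker: "{v\<in>B. f v = 0} = A"
    and v: "v \<in> B" "v' \<in> B" "f v = f v'"
  shows "f (act M l v) = f (act M l v')"
proof -
  have diff: "f (x - y) = f x - f y" if xy: "x \<in> B" "y \<in> B" for x y
  proof -
    have "x - y \<in> B" using submod_diff[OF B] xy by blast
    then have "f (x - y + y) = f (x - y) + f y" using add xy by blast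
    then show ?thesis by (simp add: algebra_simps)
  qed
  have BM: "B \<subseteq> mcar M" and actB: "\<And>x l. x \<in> B \<Longrightarrow> act M l x \<in> B"
    using B by (auto simp: is_submod_iff)
  have "v - v' \<in> B" "f (v - v') = 0" using submod_diff[OF B] diff v by auto
  then have "v - v' \<in> A" using ker by blast
  then have "act M l (v - v') \<in> A" using A by (simp add: is_submod_iff)
  moreover have "act M l (v - v') = act M l v - act M l v'" using act_diff v BM by blast
  ultimately have "f (act M l v - act M l v') = 0" using ker by auto
  then show ?thesis using diff actB v by simp
qed

lemma is_rmod_image:
  fixes f :: "(nat \<Rightarrow> 'k) \<Rightarrow> (nat \<Rightarrow> 'k)"
  assumes B: "is_submod M B" and mN: "mcar N = f ` B"
    and add: "\<forall>v\<in>B. \<forall>w\<in>B. f (v + w) = f v + f w"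
    and scale: "\<forall>c. \<forall>v\<in>B. f (vscale c v) = vscale c (f v)"
    and compat: "\<And>l v. v \<in> B \<Longrightarrow> f (act M l v) = act N l (f v)"
  shows "is_rmod \<iota> N"
proof -
  have BM: "B \<subseteq> mcar M" and actB: "\<And>x l. x \<in> B \<Longrightarrow> act M l x \<in> B"
    using B by (auto simp: is_submod_iff)
  show ?thesis
    unfolding is_rmod_def vadd_eq_plus
  proof (intro conjI allI ballI)
    fix l w assume "w \<in> mcar N"
    then obtain v where v: "v \<in> B" "w = f v" using mN by auto
    then have "act N l w = f (act M l v)" using compat by simp
    then show "act N l w \<in> mcar N" using mN actB[OF v(1)] by simp
  next
    fix l w w' assume "w \<in> mcar N" "w' \<in> mcar N"
    then obtain v v' where v: "v \<in> B" "w = f v" "v' \<in> B" "w' = f v'" using mN by auto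
    then have vM: "v \<in> mcar M" "v' \<in> mcar M" and vv': "v + v' \<in> B"
      using BM B by (auto simp: is_submod_iff)
    have "act N l (w + w') = f (act M l (v + v'))" using v vv' add compat by simp
    also have "\<dots> = f (act M l v + act M l v')" using act_add[OF vM] by simp
    also have "\<dots> = act N l w + act N l w'" using v add actB compat by simp
    finally show "act N l (w + w') = act N l w + act N l w'" .
  next
    fix l l' w assume "w \<in> mcar N"
    then obtain v where v: "v \<in> B" "w = f v" using mN by auto
    then have "act M (l + l') v = act M l v + act M l' v" using act_plus BM by blast
    then show "act N (l + l') w = act N l w + act N l' w" using v add actB compat by metis
  next
    fix l l' w assume "w \<in> mcar N"
    then obtain v where v: "v \<in> B" "w = f v" using mN by auto
    then have "act M (l * l') v = act M l' (act M l v)" using act_mult BM by blast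
    then show "act N (l * l') w = act N l' (act N l w)" using v actB compat by metis
  next
    fix w assume "w \<in> mcar N"
    then obtain v where v: "v \<in> B" "w = f v" using mN by auto
    then have "act M 1 v = v" using act_one BM by blast
    then show "act N 1 w = w" using v compat by metis
  next
    fix c w assume "w \<in> mcar N"
    then obtain v where v: "v \<in> B" "w = f v" using mN by auto
    then have "act M (\<iota> c) v = vscale c v" using act_scalar BM by blast
    then have "act N (\<iota> c) w = vscale c (f v)" using v scale compat by metis
    then show "act N (\<iota> c) w = (\<lambda>i. c * w i)" using v by (simp add: vscale_def)
  qed
qed

lemma subquot_map_of_linear:
  fixes f :: "(nat \<Rightarrow> 'k) \<Rightarrow> (nat \<Rightarrow> 'k)"
  assumes A: "is_submod M A" and B: "is_submod M B"
    and img: "f ` B = kspace e" and add: "\<forall>v\<in>B. \<forall>w\<in>B. f (v + w) = f v + f w"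
    and scale: "\<forall>c. \<forall>v\<in>B. f (vscale c v) = vscale c (f v)" and ker: "{v\<in>B. f v = 0} = A"
  shows "subquot_map \<iota> M B A (e, \<lambda>l w. f (act M l (SOME v. v \<in> B \<and> f v = w))) f"
proof -
  define N :: "('k, 'l) rmod" where "N = (e, \<lambda>l w. f (act M l (SOME v. v \<in> B \<and> f v = w)))"
  have mN: "mcar N = f ` B" using img by (simp add: N_def mcar_kspace)
  have compat: "f (act M l v) = act N l (f v)" if v: "v \<in> B" for l v
  proof -
    let ?v' = "SOME v'. v' \<in> B \<and> f v' = f v"
    have "\<exists>v'. v' \<in> B \<and> f v' = f v" using v by blast
    then have "?v' \<in> B \<and> f ?v' = f v" by (rule someI_ex)
    then have "f (act M l v) = f (act M l ?v')"
      using act_well_defined[OF A B add ker v, of ?v'] by simp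
    then show ?thesis by (simp add: N_def act_def)
  qed
  have "is_rmod \<iota> N" using is_rmod_image[OF B mN add scale compat] .
  then have "subquot_map \<iota> M B A N f" using mN add compat ker by (simp add: subquot_map_def)
  then show ?thesis unfolding N_def .
qed

lemma subquot_map_exists:
  assumes A: "is_submod M A" and B: "is_submod M B" and AB: "A \<subseteq> B"
  obtains N f where "subquot_map \<iota> M B A N f"
proof -
  have "kvec.subspace A" "kvec.subspace B" "B \<subseteq> kspace (fst M)"
    using A B by (simp_all add: submod_iff_subspace mcar_kspace)
  from linear_quotient_exists[OF this(1,2) AB this(3)] obtain e f where "f ` B = kspace e" "\<forall>v\<in>B. \<forall>w\<in>B. f (v + w) = f v + f w"
    "\<forall>c. \<forall>v\<in>B. f (vscale c v) = vscale c (f v)" "{v\<in>B. f v = 0} = A" .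
  then show ?thesis by (rule that[OF subquot_map_of_linear[OF A B]])
qed

end

lemma in_V_iso: "in_V \<iota> \<theta> \<Longrightarrow> is_rmod \<iota> M \<Longrightarrow> mod_iso \<iota> M N \<Longrightarrow> \<theta> M = \<theta> N"
  unfolding in_V_def by blast

lemma in_V_additive:
  "in_V \<iota> \<theta> \<Longrightarrow> is_rmod \<iota> M \<Longrightarrow> is_submod M U \<Longrightarrow> sec_iso \<iota> M U {0} X \<Longrightarrow>
    sec_iso \<iota> M (mcar M) U Y \<Longrightarrow> \<theta> M = \<theta> X + \<theta> Y"
  unfolding in_V_def vzero_eq_zero by blast

lemma theta_zero_module:
  assumes V: "in_V \<iota> \<theta>" and N: "is_rmod \<iota> N" and z: "mcar N = {0}"
  shows "\<theta> N = 0"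
proof -
  have "is_submod N (mcar N)" using rmodule.submod_carrier[OF rmodule.intro[OF N]] .
  moreover have "sec_iso \<iota> N (mcar N) {0} N"
    using subquot_map_id[OF N] by (auto simp: sec_iso_iff_subquot_map)
  moreover have "subquot_map \<iota> N (mcar N) (mcar N) N id"
    using subquot_map_id[OF N] z by (simp add: subquot_map_def)
  then have "sec_iso \<iota> N (mcar N) (mcar N) N" by (auto simp: sec_iso_iff_subquot_map)
  ultimately have "\<theta> N = \<theta> N + \<theta> N" using in_V_additive[OF V N] by blast
  then show ?thesis by simp
qed

context rmodule
begin

lemma subquot_map_unique:
  assumes f1: "subquot_map \<iota> M B A N1 f1" and f2: "subquot_map \<iota> M B A N2 f2"
    and B: "is_submod M B"
  shows "mod_iso \<iota> N1 N2"
proof -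
  define g where "g w = f2 (SOME v. v \<in> B \<and> f1 v = w)" for w
  have gc: "g (f1 v) = f2 v" if v: "v \<in> B" for v
  proof -
    let ?v = "SOME v'. v' \<in> B \<and> f1 v' = f1 v"
    have "\<exists>v'. v' \<in> B \<and> f1 v' = f1 v" using v by blast
    then have "?v \<in> B \<and> f1 ?v = f1 v" by (rule someI_ex)
    then have "f2 ?v = f2 v" using subquot_map_eq_iff[OF f1 B] subquot_map_eq_iff[OF f2 B] v by blast
    then show ?thesis by (simp add: g_def)
  qed
  have "subquot_map \<iota> N1 (mcar N1) {0} N2 g"
    unfolding subquot_map_def
  proof (intro conjI ballI allI)
    show "is_rmod \<iota> N2" using subquot_map_rmod[OF f2] .
    show "g ` mcar N1 = mcar N2"
      unfolding subquot_map_image[OF f1, symmetric] subquot_map_image[OF f2, symmetric] image_image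
      using gc by auto
  next
    fix v w assume "v \<in> mcar N1" "w \<in> mcar N1"
    then obtain a b where ab: "a \<in> B" "b \<in> B" "v = f1 a" "w = f1 b"
      using subquot_map_image[OF f1] by blast
    then have "a + b \<in> B" using B by (simp add: is_submod_iff)
    then show "g (v + w) = g v + g w"
      using ab gc subquot_map_add[OF f1] subquot_map_add[OF f2] by metis
  next
    fix l v assume "v \<in> mcar N1"
    then obtain a where a: "a \<in> B" "v = f1 a" using subquot_map_image[OF f1] by blast
    then have "act M l a \<in> B" using B by (simp add: is_submod_iff)
    then show "g (act N1 l v) = act N2 l (g v)"
      using a gc subquot_map_act[OF f1] subquot_map_act[OF f2] by metis
  next
    have "g v = 0 \<longleftrightarrow> v = 0" if "v \<in> mcar N1" for v
    proof -
      obtain a where a: "a \<in> B" "v = f1 a" using \<open>v \<in> mcar N1\<close> subquot_map_image[OF f1] by blast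
      have "f2 a = 0 \<longleftrightarrow> a \<in> A" "f1 a = 0 \<longleftrightarrow> a \<in> A"
        using subquot_map_kernel[OF f1] subquot_map_kernel[OF f2] a(1) by auto
      then show ?thesis using gc[OF a(1)] a(2) by simp
    qed
    then show "{v \<in> mcar N1. g v = 0} = {0}" by auto
  qed
  then show ?thesis unfolding mod_iso_def sec_iso_iff_subquot_map by auto
qed

lemma theta_sec_eq:
  assumes V: "in_V \<iota> \<theta>" and f: "subquot_map \<iota> M B A N f" and B: "is_submod M B"
  shows "theta_sec \<iota> \<theta> M B A = \<theta> N"
proof -
  let ?N = "SOME N. sec_iso \<iota> M B A N"
  have "\<exists>N. sec_iso \<iota> M B A N" using f sec_iso_iff_subquot_map by blast
  then have "sec_iso \<iota> M B A ?N" by (rule someI_ex)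
  then obtain g where g: "subquot_map \<iota> M B A ?N g" using sec_iso_iff_subquot_map by blast
  have "\<theta> ?N = \<theta> N"
    using in_V_iso[OF V subquot_map_rmod[OF g] subquot_map_unique[OF g f B]] .
  then show ?thesis by (simp add: theta_sec_def)
qed

lemma subquot_map_comp:
  assumes f: "subquot_map \<iota> M C A0 N f" and C: "is_submod M C"
    and B': "is_submod M B'" and sub: "A0 \<subseteq> B'" "B' \<subseteq> D" "D \<subseteq> C"
    and h: "subquot_map \<iota> N (f ` D) (f ` B') N' h"
  shows "subquot_map \<iota> M D B' N' (h \<circ> f)"
  unfolding subquot_map_def
proof (intro conjI ballI allI)
  show "is_rmod \<iota> N'" using subquot_map_rmod[OF h] .
  show "(h \<circ> f) ` D = mcar N'" using subquot_map_image[OF h] by (simp add: image_comp)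
next
  fix v w assume "v \<in> D" "w \<in> D"
  moreover have "v \<in> C" "w \<in> C" using calculation sub by auto
  ultimately show "(h \<circ> f) (v + w) = (h \<circ> f) v + (h \<circ> f) w"
    using subquot_map_add[OF f] subquot_map_add[OF h] by simp
next
  fix l v assume "v \<in> D"
  moreover have "v \<in> C" using calculation sub by auto
  ultimately show "(h \<circ> f) (act M l v) = act N' l ((h \<circ> f) v)"
    using subquot_map_act[OF f] subquot_map_act[OF h] by simp
next
  show "{v \<in> D. (h \<circ> f) v = 0} = B'"
  proof
    show "B' \<subseteq> {v \<in> D. (h \<circ> f) v = 0}" using subquot_map_kernel[OF h] sub by auto
    show "{v \<in> D. (h \<circ> f) v = 0} \<subseteq> B'"
    proof clarify
      fix v assume v: "v \<in> D" "(h \<circ> f) v = 0"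
      then obtain b where b: "b \<in> B'" "f v = f b" using subquot_map_kernel[OF h] by auto
      then have "v - b \<in> A0" using subquot_map_eq_iff[OF f C] v sub by blast
      then have "v - b \<in> B'" using sub by blast
      then have "v - b + b \<in> B'" using b B' unfolding is_submod_iff by blast
      then show "v \<in> B'" by simp
    qed
  qed
qed

lemma subquot_map_transport:
  assumes f: "subquot_map \<iota> M C A0 N f" and C: "is_submod M C"
    and B': "is_submod M B'" and D: "is_submod M D" and sub: "A0 \<subseteq> B'" "B' \<subseteq> D" "D \<subseteq> C"
  obtains N' h where "subquot_map \<iota> N (f ` D) (f ` B') N' h" "subquot_map \<iota> M D B' N' (h \<circ> f)"
proof -
  interpret N: rmodule \<iota> N using subquot_map_rmod[OF f] by (rule rmodule.intro)
  have "is_submod N (f ` B')" "is_submod N (f ` D)"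
    using subquot_map_image_submod[OF f C] B' D sub by auto
  from N.subquot_map_exists[OF this] obtain N' h where h: "subquot_map \<iota> N (f ` D) (f ` B') N' h"
    using sub by blast
  show ?thesis by (rule that[OF h subquot_map_comp[OF f C B' sub h]])
qed

lemma theta_sec_transport:
  assumes V: "in_V \<iota> \<theta>" and f: "subquot_map \<iota> M C A0 N f" and C: "is_submod M C"
    and B': "is_submod M B'" and D: "is_submod M D" and sub: "A0 \<subseteq> B'" "B' \<subseteq> D" "D \<subseteq> C"
  shows "theta_sec \<iota> \<theta> N (f ` D) (f ` B') = theta_sec \<iota> \<theta> M D B'"
proof -
  interpret N: rmodule \<iota> N using subquot_map_rmod[OF f] by (rule rmodule.intro)
  obtain N' h where h: "subquot_map \<iota> N (f ` D) (f ` B') N' h"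
    and hf: "subquot_map \<iota> M D B' N' (h \<circ> f)"
    by (rule subquot_map_transport[OF f C B' D sub])
  have "is_submod N (f ` D)" using subquot_map_image_submod[OF f C D] sub by auto
  then show ?thesis using N.theta_sec_eq[OF V h] theta_sec_eq[OF V hf D] by simp
qed

lemma theta_sec_self:
  assumes V: "in_V \<iota> \<theta>" and B: "is_submod M B"
  shows "theta_sec \<iota> \<theta> M B B = 0"
proof -
  obtain N f where f: "subquot_map \<iota> M B B N f" using subquot_map_exists[OF B B] by blast
  have "f v = 0" if "v \<in> B" for v using subquot_map_kernel[OF f] that by blast
  then have "f ` B = (\<lambda>_. 0) ` B" by (intro image_cong) simp_all
  also have "\<dots> = {0}" using B image_constant[of 0 B 0] by (simp add: is_submod_iff)
  finally have "mcar N = {0}" using subquot_map_image[OF f] by simp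
  then show ?thesis using theta_sec_eq[OF V f B] theta_zero_module[OF V subquot_map_rmod[OF f]] by simp
qed

lemma theta_split_carrier:
  assumes V: "in_V \<iota> \<theta>" and U: "is_submod M U"
  shows "\<theta> M = theta_sec \<iota> \<theta> M U {0} + theta_sec \<iota> \<theta> M (mcar M) U"
proof -
  have UM: "{0} \<subseteq> U" "U \<subseteq> mcar M" using U by (auto simp: is_submod_iff)
  obtain X h where h: "subquot_map \<iota> M U {0} X h"
    using subquot_map_exists[OF submod_zero U] UM by blast
  obtain Y h' where h': "subquot_map \<iota> M (mcar M) U Y h'"
    using subquot_map_exists[OF U submod_carrier] UM by blast
  have "\<theta> M = \<theta> X + \<theta> Y"
    using in_V_additive[OF V is_rmod U] h h' unfolding sec_iso_iff_subquot_map by blast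
  then show ?thesis using theta_sec_eq[OF V h U] theta_sec_eq[OF V h' submod_carrier] by simp
qed

lemma theta_sec_add:
  assumes V: "in_V \<iota> \<theta>" and A: "is_submod M A" and B: "is_submod M B" and C: "is_submod M C"
    and AB: "A \<subseteq> B" and BC: "B \<subseteq> C"
  shows "theta_sec \<iota> \<theta> M C A = theta_sec \<iota> \<theta> M C B + theta_sec \<iota> \<theta> M B A"
proof -
  obtain N f where f: "subquot_map \<iota> M C A N f" using subquot_map_exists[OF A C] AB BC by blast
  interpret N: rmodule \<iota> N using subquot_map_rmod[OF f] by (rule rmodule.intro)
  have "\<theta> N = theta_sec \<iota> \<theta> N (f ` B) (f ` A) + theta_sec \<iota> \<theta> N (f ` C) (f ` B)"
    using N.theta_split_carrier[OF V subquot_map_image_submod[OF f C B BC]]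
      subquot_map_image_kernel[OF f C] subquot_map_image[OF f] by simp
  also have "\<dots> = theta_sec \<iota> \<theta> M B A + theta_sec \<iota> \<theta> M C B"
    using theta_sec_transport[OF V f C] A B C AB BC by simp
  finally show ?thesis using theta_sec_eq[OF V f C] by simp
qed

lemma subquot_map_second_iso:
  assumes X: "is_submod M X" and A: "is_submod M A"
  obtains N f where "subquot_map \<iota> M (X + A) A N f" "subquot_map \<iota> M X (X \<inter> A) N f"
proof -
  have S: "is_submod M (X + A)" using submod_set_plus[OF X A] .
  obtain N f where f: "subquot_map \<iota> M (X + A) A N f"
    using subquot_map_exists[OF A S] subset_set_plus_submod2[OF X] by blast
  have XS: "X \<subseteq> X + A" using subset_set_plus_submod1[OF A] .
  have "f ` (X + A) \<subseteq> f ` X"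
  proof
    fix w assume "w \<in> f ` (X + A)"
    then obtain x a where xa: "x \<in> X" "a \<in> A" "w = f (x + a)" by (auto elim: set_plus_elim)
    then have "w = f x + f a" using subquot_map_add[OF f] XS subset_set_plus_submod2[OF X] by blast
    moreover have "f a = 0" using subquot_map_kernel[OF f] xa by blast
    ultimately show "w \<in> f ` X" using xa by simp
  qed
  then have "subquot_map \<iota> M X (X \<inter> A) N f"
    using subquot_map_restrict[OF f S XS] XS by blast
  with f show ?thesis by (rule that)
qed

lemma theta_sec_second_iso:
  assumes V: "in_V \<iota> \<theta>" and X: "is_submod M X" and A: "is_submod M A"
  shows "theta_sec \<iota> \<theta> M (X + A) A = theta_sec \<iota> \<theta> M X (X \<inter> A)"
proof -
  obtain N f where "subquot_map \<iota> M (X + A) A N f" "subquot_map \<iota> M X (X \<inter> A) N f"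
    by (rule subquot_map_second_iso[OF X A])
  then show ?thesis using theta_sec_eq[OF V] submod_set_plus[OF X A] X by simp
qed

lemma theta_sec_carrier_split:
  assumes V: "in_V \<iota> \<theta>" and B: "is_submod M B" and A: "is_submod M A"
  shows "theta_sec \<iota> \<theta> M (mcar M) A =
    theta_sec \<iota> \<theta> M (mcar M) (B + A) + theta_sec \<iota> \<theta> M B (B \<inter> A)"
proof -
  have "is_submod M (B + A)" using submod_set_plus[OF B A] .
  moreover from this have "B + A \<subseteq> mcar M" by (simp add: is_submod_iff)
  ultimately show ?thesis
    using theta_sec_add[OF V A _ submod_carrier subset_set_plus_submod2[OF B]]
      theta_sec_second_iso[OF V B A] by simp
qed

end

section \<open>Torsion classes and strict subobjects\<close>

lemma torsion_class_rmod: "torsion_class \<iota> G \<Longrightarrow> N \<in> G \<Longrightarrow> is_rmod \<iota> N"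
  unfolding torsion_class_def by blast

locale rmodule_tc = rmodule \<iota> M for \<iota> :: "'k::field \<Rightarrow> 'l::ring_1" and M +
  fixes G :: "('k, 'l) rmod set"
  assumes torsion_class: "torsion_class \<iota> G"
begin

lemma tc_iso: "N \<in> G \<Longrightarrow> mod_iso \<iota> N N' \<Longrightarrow> N' \<in> G"
  using torsion_class unfolding torsion_class_def by blast

lemma tc_quotient: "N \<in> G \<Longrightarrow> is_submod N U \<Longrightarrow> sec_iso \<iota> N (mcar N) U N' \<Longrightarrow> N' \<in> G"
  using torsion_class unfolding torsion_class_def by blast

lemma tc_extension:
  "is_rmod \<iota> N \<Longrightarrow> is_submod N U \<Longrightarrow> X \<in> G \<Longrightarrow> Y \<in> G \<Longrightarrow>
    sec_iso \<iota> N U {0} X \<Longrightarrow> sec_iso \<iota> N (mcar N) U Y \<Longrightarrow> N \<in> G"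
  using torsion_class unfolding torsion_class_def vzero_eq_zero by blast

lemma rmodule_tc_subquot:
  "subquot_map \<iota> M B A N f \<Longrightarrow> rmodule_tc \<iota> N G"
  using subquot_map_rmod torsion_class by (blast intro: rmodule_tc.intro rmodule.intro rmodule_tc_axioms.intro)

lemma sq_in_iff:
  assumes f: "subquot_map \<iota> M B A N f" and B: "is_submod M B"
  shows "sq_in \<iota> G M B A \<longleftrightarrow> N \<in> G"
proof
  assume "sq_in \<iota> G M B A"
  then obtain N0 g where "N0 \<in> G" "subquot_map \<iota> M B A N0 g"
    unfolding sq_in_def sec_iso_iff_subquot_map by blast
  then show "N \<in> G" using tc_iso subquot_map_unique[OF _ f B] by blast
next
  assume "N \<in> G"
  then show "sq_in \<iota> G M B A" using f unfolding sq_in_def sec_iso_iff_subquot_map by blast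
qed

lemma sq_in_carrier: "M \<in> G \<Longrightarrow> sq_in \<iota> G M (mcar M) {0}"
  using sq_in_iff[OF subquot_map_id[OF is_rmod] submod_carrier] by simp

lemma sq_in_quotient:
  assumes sq: "sq_in \<iota> G M B A0" and A0: "is_submod M A0" and A: "is_submod M A"
    and B: "is_submod M B" and sub: "A0 \<subseteq> A" "A \<subseteq> B"
  shows "sq_in \<iota> G M B A"
proof -
  obtain N f where f: "subquot_map \<iota> M B A0 N f" using subquot_map_exists[OF A0 B] sub by blast
  obtain N' h where h: "subquot_map \<iota> N (f ` B) (f ` A) N' h" and hf: "subquot_map \<iota> M B A N' (h \<circ> f)"
    by (rule subquot_map_transport[OF f B A B sub order_refl])
  have "N \<in> G" using sq_in_iff[OF f B] sq by simp
  moreover have "sec_iso \<iota> N (mcar N) (f ` A) N'"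
    using h subquot_map_image[OF f] unfolding sec_iso_iff_subquot_map by auto
  ultimately have "N' \<in> G" by (rule tc_quotient[OF _ subquot_map_image_submod[OF f B A sub(2)]])
  then show ?thesis using sq_in_iff[OF hf B] by simp
qed

lemma sq_in_extension:
  assumes s1: "sq_in \<iota> G M B A" and s2: "sq_in \<iota> G M A C"
    and C: "is_submod M C" and A: "is_submod M A" and B: "is_submod M B"
    and sub: "C \<subseteq> A" "A \<subseteq> B"
  shows "sq_in \<iota> G M B C"
proof -
  obtain N f where f: "subquot_map \<iota> M B C N f" using subquot_map_exists[OF C B] sub by blast
  have U: "is_submod N (f ` A)" using subquot_map_image_submod[OF f B A sub(2)] .
  obtain X h where h: "subquot_map \<iota> N (f ` A) (f ` C) X h" and hf: "subquot_map \<iota> M A C X (h \<circ> f)"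
    by (rule subquot_map_transport[OF f B C A order_refl sub])
  obtain Y h' where h': "subquot_map \<iota> N (f ` B) (f ` A) Y h'"
    and hf': "subquot_map \<iota> M B A Y (h' \<circ> f)"
    by (rule subquot_map_transport[OF f B A B sub order_refl])
  have "X \<in> G" "Y \<in> G" using sq_in_iff[OF hf A] sq_in_iff[OF hf' B] s1 s2 by simp_all
  moreover have "sec_iso \<iota> N (f ` A) {0} X" "sec_iso \<iota> N (mcar N) (f ` A) Y"
    using h h' subquot_map_image_kernel[OF f B] subquot_map_image[OF f]
    unfolding sec_iso_iff_subquot_map by auto
  ultimately have "N \<in> G" by (rule tc_extension[OF subquot_map_rmod[OF f] U])
  then show ?thesis using sq_in_iff[OF f B] by simp
qed

lemma sq_in_transport:
  assumes f: "subquot_map \<iota> M C A0 N f" and C: "is_submod M C"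
    and B': "is_submod M B'" and D: "is_submod M D" and sub: "A0 \<subseteq> B'" "B' \<subseteq> D" "D \<subseteq> C"
  shows "sq_in \<iota> G N (f ` D) (f ` B') \<longleftrightarrow> sq_in \<iota> G M D B'"
proof -
  interpret N: rmodule_tc \<iota> N G using rmodule_tc_subquot[OF f] .
  obtain N' h where h: "subquot_map \<iota> N (f ` D) (f ` B') N' h"
    and hf: "subquot_map \<iota> M D B' N' (h \<circ> f)"
    by (rule subquot_map_transport[OF f C B' D sub])
  have "is_submod N (f ` D)" using subquot_map_image_submod[OF f C D] sub by auto
  then show ?thesis using N.sq_in_iff[OF h] sq_in_iff[OF hf D] by simp
qed

lemma sq_in_second_iso:
  assumes X: "is_submod M X" and A: "is_submod M A"
  shows "sq_in \<iota> G M (X + A) A \<longleftrightarrow> sq_in \<iota> G M X (X \<inter> A)"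
proof -
  obtain N f where "subquot_map \<iota> M (X + A) A N f" "subquot_map \<iota> M X (X \<inter> A) N f"
    by (rule subquot_map_second_iso[OF X A])
  then show ?thesis using sq_in_iff submod_set_plus[OF X A] X by simp
qed

lemma strict_subobj_submod: "strict_subobj \<iota> G M A \<Longrightarrow> is_submod M A"
  by (simp add: strict_subobj_def subobj_def)

lemma strict_subobj_sq_in: "strict_subobj \<iota> G M A \<Longrightarrow> sq_in \<iota> G M A {0}"
  by (simp add: strict_subobj_def subobj_def)

lemma strict_subobj_Int: "strict_subobj \<iota> G M A \<Longrightarrow> subobj \<iota> G M B \<Longrightarrow> sq_in \<iota> G M (A \<inter> B) {0}"
  by (simp add: strict_subobj_def)

lemma strict_subobj_carrier:
  assumes "M \<in> G"
  shows "strict_subobj \<iota> G M (mcar M)"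
proof -
  have "subobj \<iota> G M (mcar M)" using sq_in_carrier[OF assms] submod_carrier by (simp add: subobj_def)
  moreover have "mcar M \<inter> B = B" if "subobj \<iota> G M B" for B
    using that by (auto simp: subobj_def is_submod_iff)
  ultimately show ?thesis by (auto simp: strict_subobj_def subobj_def)
qed

lemma subobj_set_plus:
  assumes X: "subobj \<iota> G M X" and B: "subobj \<iota> G M B"
  shows "subobj \<iota> G M (X + B)"
proof -
  have Xs: "is_submod M X" and Bs: "is_submod M B" using X B by (auto simp: subobj_def)
  have "sq_in \<iota> G M B (B \<inter> X)"
    using sq_in_quotient[of B "{0}"] B submod_zero submod_Int[OF Bs Xs] Bs
    by (auto simp: subobj_def is_submod_iff)
  then have "sq_in \<iota> G M (B + X) X" using sq_in_second_iso[OF Bs Xs] by simp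
  then have "sq_in \<iota> G M (B + X) {0}"
    using sq_in_extension[OF _ _ submod_zero Xs submod_set_plus[OF Bs Xs]] X
      subset_set_plus_submod2[OF Bs] by (auto simp: subobj_def is_submod_iff)
  then show ?thesis using submod_set_plus[OF Xs Bs] by (simp add: subobj_def add.commute)
qed

lemma strict_subobj_set_plus:
  assumes X: "strict_subobj \<iota> G M X" and A: "strict_subobj \<iota> G M A"
  shows "strict_subobj \<iota> G M (X + A)"
proof -
  have Xs: "is_submod M X" and As: "is_submod M A" using X A strict_subobj_submod by auto
  have "sq_in \<iota> G M ((X + A) \<inter> B) {0}" if B: "subobj \<iota> G M B" for B
  proof -
    have Bs: "is_submod M B" using B by (simp add: subobj_def)
    define Y where "Y = (X + A) \<inter> B"
    define Z where "Z = A \<inter> (B + X)"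
    have Ys: "is_submod M Y" unfolding Y_def using submod_Int submod_set_plus Xs As Bs by blast
    have BXs: "is_submod M (B + X)" using submod_set_plus[OF Bs Xs] .
    have Zs: "is_submod M Z" unfolding Z_def using submod_Int[OF As BXs] .
    have "subobj \<iota> G M (B + X)" using subobj_set_plus B X by (simp add: strict_subobj_def)
    then have "sq_in \<iota> G M Z {0}" using strict_subobj_Int[OF A] unfolding Z_def by blast
    then have "sq_in \<iota> G M Z (Z \<inter> X)"
      using sq_in_quotient[of Z "{0}" "Z \<inter> X"] submod_zero submod_Int[OF Zs Xs] Zs
      by (auto simp: is_submod_iff)
    then have "sq_in \<iota> G M (Z + X) X" using sq_in_second_iso[OF Zs Xs] by simp
    then have "sq_in \<iota> G M (Y + X) X"
      using set_plus_Int_exchange[OF Xs As Bs] unfolding Y_def Z_def by simp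
    then have "sq_in \<iota> G M Y (Y \<inter> X)" using sq_in_second_iso[OF Ys Xs] by simp
    moreover have "Y \<inter> X = X \<inter> B" unfolding Y_def using subset_set_plus_submod1[OF As] by blast
    ultimately have "sq_in \<iota> G M Y (X \<inter> B)" by simp
    moreover have "sq_in \<iota> G M (X \<inter> B) {0}" using strict_subobj_Int[OF X B] .
    moreover have "X \<inter> B \<subseteq> Y" unfolding Y_def using subset_set_plus_submod1[OF As] by blast
    ultimately show "sq_in \<iota> G M ((X + A) \<inter> B) {0}"
      using sq_in_extension[OF _ _ submod_zero submod_Int[OF Xs Bs] Ys] submod_Int[OF Xs Bs]
      unfolding Y_def by (auto simp: is_submod_iff)
  qed
  moreover have "subobj \<iota> G M (X + A)"
    using subobj_set_plus X A by (simp add: strict_subobj_def)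
  ultimately show ?thesis by (simp add: strict_subobj_def)
qed

lemma subobj_preimage:
  assumes f: "subquot_map \<iota> M C A0 N f" and C: "is_submod M C" and A0: "sq_in \<iota> G M A0 {0}"
    and U: "subobj \<iota> G N U"
  shows "subobj \<iota> G M {v\<in>C. f v \<in> U}"
proof -
  let ?P = "{v\<in>C. f v \<in> U}"
  have A0s: "is_submod M A0" using subquot_map_kernel_submod[OF f C] .
  have "is_submod N U" using U by (simp add: subobj_def)
  note P = subquot_map_preimage[OF f C this]
  have "sq_in \<iota> G M ?P A0"
    using sq_in_transport[OF f C A0s P(1) order_refl P(2)] P(3) subquot_map_image_kernel[OF f C] U
    by (simp add: subobj_def)
  then have "sq_in \<iota> G M ?P {0}"
    using sq_in_extension[OF _ A0 submod_zero A0s P(1)] P(2) A0s by (auto simp: is_submod_iff)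
  then show ?thesis using P(1) by (simp add: subobj_def)
qed

lemma sq_in_image_iff:
  assumes f: "subquot_map \<iota> M C A0 N f" and C: "is_submod M C"
    and D: "is_submod M D" and DC: "D \<subseteq> C"
  shows "sq_in \<iota> G N (f ` D) {0} \<longleftrightarrow> sq_in \<iota> G M D (D \<inter> A0)"
proof -
  have A0: "is_submod M A0" using subquot_map_kernel_submod[OF f C] .
  have S: "is_submod M (D + A0)" using submod_set_plus[OF D A0] .
  have SC: "D + A0 \<subseteq> C" using set_plus_subset_submod[OF C DC subquot_map_kernel_subset[OF f]] .
  have "sq_in \<iota> G N (f ` D) {0} \<longleftrightarrow> sq_in \<iota> G N (f ` (D + A0)) (f ` A0)"
    using image_set_plus_kernel[OF f C DC] subquot_map_image_kernel[OF f C] by simp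
  also have "\<dots> \<longleftrightarrow> sq_in \<iota> G M (D + A0) A0"
    by (rule sq_in_transport[OF f C A0 S order_refl subset_set_plus_submod2[OF D] SC])
  also have "\<dots> \<longleftrightarrow> sq_in \<iota> G M D (D \<inter> A0)" by (rule sq_in_second_iso[OF D A0])
  finally show ?thesis .
qed

lemma strict_subobj_preimage:
  assumes f: "subquot_map \<iota> M C A0 N f" and C: "strict_subobj \<iota> G M C"
    and A0: "strict_subobj \<iota> G M A0" and U: "strict_subobj \<iota> G N U"
  shows "strict_subobj \<iota> G M {v\<in>C. f v \<in> U}"
proof -
  interpret N: rmodule_tc \<iota> N G using rmodule_tc_subquot[OF f] .
  define P where "P = {v\<in>C. f v \<in> U}"
  have Cs: "is_submod M C" and A0s: "is_submod M A0"
    using C A0 strict_subobj_submod by auto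
  note P = subquot_map_preimage[OF f Cs N.strict_subobj_submod[OF U], folded P_def]
  have "sq_in \<iota> G M (P \<inter> B) {0}" if B: "subobj \<iota> G M B" for B
  proof -
    have Bs: "is_submod M B" using B by (simp add: subobj_def)
    have CBs: "is_submod M (C \<inter> B)" using submod_Int[OF Cs Bs] .
    have PBs: "is_submod M (P \<inter> B)" using submod_Int[OF P(1) Bs] .
    have "sq_in \<iota> G M (C \<inter> B) (C \<inter> B \<inter> A0)"
      using sq_in_quotient[OF strict_subobj_Int[OF C B] submod_zero submod_Int[OF CBs A0s] CBs]
        CBs A0s by (auto simp: is_submod_iff)
    then have "subobj \<iota> G N (f ` (C \<inter> B))"
      using sq_in_image_iff[OF f Cs CBs] subquot_map_image_submod[OF f Cs CBs]
      by (simp add: subobj_def)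
    then have "sq_in \<iota> G N (U \<inter> f ` (C \<inter> B)) {0}" using N.strict_subobj_Int[OF U] by blast
    moreover have "U \<inter> f ` (C \<inter> B) = f ` (P \<inter> B)" unfolding P_def by blast
    moreover have "P \<inter> B \<inter> A0 = A0 \<inter> B" using P(2) by blast
    ultimately have "sq_in \<iota> G M (P \<inter> B) (A0 \<inter> B)"
      using sq_in_image_iff[OF f Cs PBs] unfolding P_def by auto
    then show ?thesis
      using sq_in_extension[OF _ strict_subobj_Int[OF A0 B] submod_zero submod_Int[OF A0s Bs] PBs]
        P(2) submod_Int[OF A0s Bs] by (auto simp: is_submod_iff)
  qed
  moreover have "subobj \<iota> G M P"
    unfolding P_def using subobj_preimage[OF f Cs strict_subobj_sq_in[OF A0]] U
    by (simp add: strict_subobj_def)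
  ultimately show ?thesis unfolding P_def by (simp add: strict_subobj_def)
qed

lemma strict_subobj_image:
  assumes f: "subquot_map \<iota> M C A0 N f" and C: "strict_subobj \<iota> G M C"
    and A0: "strict_subobj \<iota> G M A0" and A: "strict_subobj \<iota> G M A" and A0A: "A0 \<subseteq> A"
  shows "strict_subobj \<iota> G N (f ` (C \<inter> A))"
proof -
  have Cs: "is_submod M C" and A0s: "is_submod M A0" and As: "is_submod M A" and A0C: "A0 \<subseteq> C"
    using C A0 A strict_subobj_submod subquot_map_kernel_subset[OF f] by auto
  have fA0: "f ` A0 = {0}" using subquot_map_image_kernel[OF f Cs] .
  have sq_in_image: "sq_in \<iota> G N (f ` (A \<inter> D)) {0}" if D: "subobj \<iota> G M D" "A0 \<subseteq> D" "D \<subseteq> C" for D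
  proof -
    have ADs: "is_submod M (A \<inter> D)" using submod_Int[OF As] D by (simp add: subobj_def)
    have A0AD: "A0 \<subseteq> A \<inter> D" using A0A D by blast
    have "sq_in \<iota> G M (A \<inter> D) A0"
      using sq_in_quotient[OF strict_subobj_Int[OF A D(1)] submod_zero A0s ADs] A0s A0AD
      by (auto simp: is_submod_iff)
    then show ?thesis using sq_in_transport[OF f Cs A0s ADs order_refl A0AD] D(3) fA0 by auto
  qed
  have "subobj \<iota> G N (f ` (C \<inter> A))"
    using sq_in_image[of C] strict_subobj_submod[OF C] A0C C
      subquot_map_image_submod[OF f Cs submod_Int[OF Cs As]]
    by (simp add: subobj_def strict_subobj_def Int_commute)
  moreover have "sq_in \<iota> G N (f ` (C \<inter> A) \<inter> U) {0}" if U: "subobj \<iota> G N U" for U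
  proof -
    let ?P = "{v\<in>C. f v \<in> U}"
    have "f ` (C \<inter> A) \<inter> U = f ` (A \<inter> ?P)" by blast
    moreover have "subobj \<iota> G M ?P"
      using subobj_preimage[OF f Cs strict_subobj_sq_in[OF A0] U] .
    moreover have "A0 \<subseteq> ?P"
      using subquot_map_preimage(2)[OF f Cs] U by (simp add: subobj_def)
    ultimately show ?thesis using sq_in_image[of ?P] by auto
  qed
  ultimately show ?thesis by (simp add: strict_subobj_def)
qed

lemma theta_sec_nonneg_of_WG:
  assumes V: "in_V \<iota> \<theta>" and W: "M \<in> WG \<iota> G \<theta>" and A: "strict_subobj \<iota> G M A"
  shows "theta_sec \<iota> \<theta> M (mcar M) A \<ge> 0"
proof -
  have "\<theta> M = 0" "theta_sec \<iota> \<theta> M A {0} \<le> 0" using W A by (auto simp: WG_def DG_def)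
  then show ?thesis using theta_split_carrier[OF V strict_subobj_submod[OF A]] by simp
qed

lemma proper_strict_quotient:
  assumes MG: "M \<in> G" and A: "strict_subobj \<iota> G M A" "A \<noteq> mcar M"
    and f: "subquot_map \<iota> M (mcar M) A N f"
  shows "N \<in> G" "nonzero_mod N"
proof -
  have As: "is_submod M A" using strict_subobj_submod[OF A(1)] .
  then have "A \<subseteq> mcar M" by (simp add: is_submod_iff)
  then have "sq_in \<iota> G M (mcar M) A"
    using sq_in_quotient[OF sq_in_carrier[OF MG] submod_zero As submod_carrier] As
    by (simp add: is_submod_iff)
  then show "N \<in> G" using sq_in_iff[OF f submod_carrier] by simp
  show "nonzero_mod N"
    using subquot_map_image[OF f] subquot_map_kernel[OF f] A(2) by (auto simp: nonzero_mod_def)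
qed

lemma quotient_in_DG:
  assumes V: "in_V \<iota> \<theta>" and MG: "M \<in> G" and A: "strict_subobj \<iota> G M A"
    and f: "subquot_map \<iota> M (mcar M) A N f" and zero: "\<theta> N = 0"
    and larger: "\<And>P. strict_subobj \<iota> G M P \<Longrightarrow> A \<subset> P \<Longrightarrow> P \<noteq> mcar M \<Longrightarrow>
      theta_sec \<iota> \<theta> M (mcar M) P \<ge> 0"
  shows "\<theta> \<in> DG \<iota> G N"
  unfolding DG_def
proof (intro CollectI conjI allI impI)
  interpret N: rmodule_tc \<iota> N G using rmodule_tc_subquot[OF f] .
  fix U assume U: "strict_subobj \<iota> G N U"
  define P where "P = {v\<in>mcar M. f v \<in> U}"
  have As: "is_submod M A" using strict_subobj_submod[OF A] .
  have P: "strict_subobj \<iota> G M P"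
    unfolding P_def using strict_subobj_preimage[OF f strict_subobj_carrier[OF MG] A U] .
  note Pprops = subquot_map_preimage[OF f submod_carrier N.strict_subobj_submod[OF U], folded P_def]
  have PM: "P \<subseteq> mcar M" unfolding P_def by blast
  have "theta_sec \<iota> \<theta> N U {0} = theta_sec \<iota> \<theta> M P A"
    using theta_sec_transport[OF V f submod_carrier As Pprops(1) order_refl Pprops(2) PM]
      Pprops(3) subquot_map_image_kernel[OF f submod_carrier] by simp
  moreover have "0 = theta_sec \<iota> \<theta> M (mcar M) P + theta_sec \<iota> \<theta> M P A"
    using theta_sec_add[OF V As Pprops(1) submod_carrier Pprops(2) PM]
      theta_sec_eq[OF V f submod_carrier] zero by simp
  moreover have "theta_sec \<iota> \<theta> M (mcar M) P \<ge> 0"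
  proof (cases "P = A \<or> P = mcar M")
    case True
    then show ?thesis
      using theta_sec_eq[OF V f submod_carrier] zero theta_sec_self[OF V submod_carrier] by auto
  next
    case False
    then show ?thesis using larger[OF P] Pprops(2) by blast
  qed
  ultimately show "theta_sec \<iota> \<theta> N U {vzero} \<le> 0" by simp
qed (use zero in simp)

end

(* At the first zero x0 after s, g' x0 > 0 would make g negative just before x0. *)
lemma positive_stays_positive:
  fixes g g' :: "real \<Rightarrow> real"
  assumes der: "\<And>t. (g has_real_derivative g' t) (at t)"
    and pos: "\<And>r. r \<ge> s \<Longrightarrow> g r = 0 \<Longrightarrow> g' r > 0"
    and gs: "g s > 0" and r: "r \<ge> s"
  shows "g r > 0"
proof (rule ccontr)
  assume "\<not> g r > 0"
  then have gr: "g r \<le> 0" by simp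
  have cont: "continuous_on UNIV g"
    using der by (intro continuous_at_imp_continuous_on) (auto intro: DERIV_isCont)
  then have contI: "continuous_on {a..b} g" for a b using continuous_on_subset by blast
  define Z where "Z = {x. s \<le> x \<and> x \<le> r \<and> g x = 0}"
  have "Z \<noteq> {}" using IVT2'[of g r 0 s, OF gr _ r contI] gs unfolding Z_def by auto
  moreover have "closed Z" unfolding Z_def
    by (intro closed_Collect_conj closed_Collect_le closed_Collect_eq cont continuous_on_const continuous_on_id)
  moreover have bdd: "bdd_below Z" unfolding Z_def by (auto intro: bdd_belowI)
  ultimately have x0Z: "Inf Z \<in> Z" using closed_contains_Inf by blast
  define x0 where "x0 = Inf Z"
  have x0: "s \<le> x0" "x0 \<le> r" "g x0 = 0" using x0Z unfolding x0_def Z_def by auto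
  have sx0: "s < x0" using x0 gs by (cases "s = x0") auto
  have below: "g x > 0" if x: "s \<le> x" "x < x0" for x
  proof (rule ccontr)
    assume "\<not> g x > 0"
    then obtain z where z: "s \<le> z" "z \<le> x" "g z = 0"
      using IVT2'[of g x 0 s, OF _ _ x(1) contI] gs by auto
    then have "z \<in> Z" using x x0 unfolding Z_def by auto
    then have "x0 \<le> z" unfolding x0_def using bdd by (rule cInf_lower)
    then show False using z x by simp
  qed
  have "g' x0 > 0" using pos x0 by simp
  then obtain d where d: "d > 0" "\<forall>h>0. h < d \<longrightarrow> g (x0 - h) < g x0"
    using DERIV_pos_inc_left[OF der] by blast
  define h where "h = min (d / 2) ((x0 - s) / 2)"
  have h: "h > 0" "h < d" using d sx0 unfolding h_def by auto
  have "g (x0 - h) < 0" using d(2) h x0 by auto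
  moreover have "h \<le> (x0 - s) / 2" unfolding h_def by (rule min.cobounded2)
  then have "g (x0 - h) > 0" using below[of "x0 - h"] h sx0 by simp
  ultimately show False by simp
qed

lemma nonneg_becomes_positive:
  fixes g g' :: "real \<Rightarrow> real"
  assumes der: "\<And>t. (g has_real_derivative g' t) (at t)"
    and pos: "\<And>r. r \<ge> s \<Longrightarrow> g r = 0 \<Longrightarrow> g' r > 0"
    and gs: "g s \<ge> 0" and r: "r > s"
  shows "g r > 0"
proof (cases "g s > 0")
  case True
  show ?thesis by (rule positive_stays_positive[OF der pos True]) (use r in auto)
next
  case False
  then have g0: "g s = 0" using gs by linarith
  have "g' s > 0" by (rule pos) (use g0 in auto)
  then obtain d where d: "d > 0" and dd: "\<And>h. h > 0 \<Longrightarrow> h < d \<Longrightarrow> g s < g (s + h)"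
    using DERIV_pos_inc_right[OF der] by blast
  show ?thesis
  proof (cases "r < s + d")
    case True
    have "g s < g (s + (r - s))" by (rule dd) (use True r in auto)
    then show ?thesis using g0 by simp
  next
    case False
    have "g s < g (s + d / 2)" by (rule dd) (use d in auto)
    then have p: "g (s + d / 2) > 0" using g0 by linarith
    have q: "g' r' > 0" if "r' \<ge> s + d / 2" "g r' = 0" for r'
      by (rule pos) (use that d in auto)
    show ?thesis by (rule positive_stays_positive[OF der q p]) (use False d in auto)
  qed
qed

section \<open>Green paths\<close>

lemma PG_iff:
  assumes "M \<in> G" and "nonzero_mod M"
  shows "M \<in> PG \<iota> G \<theta> \<longleftrightarrow>
    (\<forall>A. strict_subobj \<iota> G M A \<longrightarrow> A \<noteq> mcar M \<longrightarrow> theta_sec \<iota> \<theta> M (mcar M) A > 0)"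
  using assms by (auto simp: PG_def)

locale green_path =
  fixes \<iota> :: "'k::field \<Rightarrow> 'l::ring_1" and G :: "('k, 'l) rmod set"
    and \<theta> :: "real \<Rightarrow> ('k, 'l) rmod \<Rightarrow> real"
  assumes torsion_class: "torsion_class \<iota> G" and green: "smooth_green_path \<iota> G \<theta>"
begin

lemma in_V_theta: "in_V \<iota> (\<theta> t)"
  using green by (simp add: smooth_green_path_def)

lemma rmodule_tc: "M \<in> G \<Longrightarrow> rmodule_tc \<iota> M G"
  using torsion_class torsion_class_rmod
  by (blast intro: rmodule_tc.intro rmodule.intro rmodule_tc_axioms.intro)

lemma becomes_positive_if_DG_at_zeros:
  assumes NG: "N \<in> G" and NZ: "nonzero_mod N"
    and DG: "\<And>t. t \<ge> s \<Longrightarrow> \<theta> t N = 0 \<Longrightarrow> \<theta> t \<in> DG \<iota> G N"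
    and nonneg: "\<theta> s N \<ge> 0" and r: "s < r"
  shows "\<theta> r N > 0"
proof -
  obtain D where D: "D 0 = (\<lambda>t. \<theta> t N)" "\<And>n t. (D n has_real_derivative D (Suc n) t) (at t)"
    using green torsion_class_rmod[OF torsion_class NG]
    unfolding smooth_green_path_def smooth_real_def by blast
  have der: "((\<lambda>t. \<theta> t N) has_real_derivative D 1 t) (at t)" for t
    using D by (metis One_nat_def)
  have "D 1 t > 0" if "t \<ge> s" "\<theta> t N = 0" for t
    using green NG NZ DG[OF that] DERIV_imp_deriv[OF der]
    unfolding smooth_green_path_def by metis
  then show ?thesis using nonneg_becomes_positive[OF der _ nonneg r] by blast
qed

lemma quotients_become_positive:
  assumes MG: "M \<in> G"
    and nonneg: "\<And>A. strict_subobj \<iota> G M A \<Longrightarrow> theta_sec \<iota> (\<theta> s) M (mcar M) A \<ge> 0"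
    and A: "strict_subobj \<iota> G M A" "A \<noteq> mcar M" and u: "s < u"
  shows "theta_sec \<iota> (\<theta> u) M (mcar M) A > 0"
proof -
  interpret M: rmodule_tc \<iota> M G using rmodule_tc[OF MG] .
  have "\<forall>A. strict_subobj \<iota> G M A \<longrightarrow> A \<noteq> mcar M \<longrightarrow> fst M - kvec.dim A = n \<longrightarrow>
      (\<forall>r>s. theta_sec \<iota> (\<theta> r) M (mcar M) A > 0)" for n
  proof (induction n rule: less_induct)
    case (less n)
    show ?case
    proof (intro allI impI)
      fix A r assume A: "strict_subobj \<iota> G M A" "A \<noteq> mcar M" and n: "fst M - kvec.dim A = n"
        and r: "s < r"
      have As: "is_submod M A" using M.strict_subobj_submod[OF A(1)] .
      then have "A \<subseteq> mcar M" by (simp add: is_submod_iff)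
      then obtain N f where f: "subquot_map \<iota> M (mcar M) A N f"
        by (rule M.subquot_map_exists[OF As M.submod_carrier])
      have th: "theta_sec \<iota> (\<theta> t) M (mcar M) A = \<theta> t N" for t
        using M.theta_sec_eq[OF in_V_theta f M.submod_carrier] .
      have "N \<in> G" "nonzero_mod N" using M.proper_strict_quotient[OF MG A f] by simp_all
      moreover have "\<theta> t \<in> DG \<iota> G N" if t: "t \<ge> s" "\<theta> t N = 0" for t
      proof (rule M.quotient_in_DG[OF in_V_theta MG A(1) f t(2)])
        fix P assume P: "strict_subobj \<iota> G M P" "A \<subset> P" "P \<noteq> mcar M"
        show "theta_sec \<iota> (\<theta> t) M (mcar M) P \<ge> 0"
        proof (cases "t = s")
          case False
          have "fst M - kvec.dim P < n"
            using M.codim_psubset_less[OF As M.strict_subobj_submod[OF P(1)] P(2)] n by simp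
          then have "\<forall>r>s. theta_sec \<iota> (\<theta> r) M (mcar M) P > 0" using less.IH P by blast
          moreover have "s < t" using t False by simp
          ultimately show ?thesis by (simp add: less_imp_le)
        qed (use nonneg[OF P(1)] in simp)
      qed
      moreover have "\<theta> s N \<ge> 0" using nonneg[OF A(1)] th by simp
      ultimately have "\<theta> r N > 0" using becomes_positive_if_DG_at_zeros r by blast
      then show "theta_sec \<iota> (\<theta> r) M (mcar M) A > 0" using th by simp
    qed
  qed
  then show ?thesis using A u by blast
qed

end

locale hn_filtration = green_path \<iota> G \<theta>
  for \<iota> :: "'k::field \<Rightarrow> 'l::ring_1" and G \<theta> +
  fixes M :: "('k, 'l) rmod" and m :: nat and Ms :: "nat \<Rightarrow> (nat \<Rightarrow> 'k) set"
    and t :: "nat \<Rightarrow> real"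
  assumes M_in_G: "M \<in> G" and nonzero: "nonzero_mod M"
    and top: "Ms 0 = mcar M" and bottom: "Ms m = {vzero}"
    and decreasing: "\<forall>k\<in>{1..m}. Ms k \<subset> Ms (k - 1)"
    and strict: "\<forall>k\<le>m. strict_subobj \<iota> G M (Ms k)"
    and factors: "\<forall>k\<in>{1..m}. \<exists>X. sec_iso \<iota> M (Ms (k - 1)) (Ms k) X \<and> X \<in> WG \<iota> G (\<theta> (t k))"
    and times_decreasing: "\<forall>i j. 1 \<le> i \<longrightarrow> i < j \<longrightarrow> j \<le> m \<longrightarrow> t j < t i"
begin

sublocale M: rmodule_tc \<iota> M G
  using rmodule_tc[OF M_in_G] .

lemma length_pos: "1 \<le> m"
  using top bottom nonzero by (cases m) (auto simp: nonzero_mod_def)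

lemma step_psubset: "k \<in> {1..m} \<Longrightarrow> Ms k \<subset> Ms (k - 1)"
  using decreasing by blast

lemma all_before_iff_first_before: "(\<forall>k\<in>{1..m}. t k < t0) \<longleftrightarrow> t 1 < t0"
proof -
  have "t k \<le> t 1" if "k \<in> {1..m}" for k
    using times_decreasing that by (cases "k = 1") (auto intro: less_imp_le)
  then show ?thesis using length_pos by fastforce
qed

lemma factor:
  assumes "k \<in> {1..m}"
  obtains X f where "subquot_map \<iota> M (Ms (k - 1)) (Ms k) X f" "X \<in> WG \<iota> G (\<theta> (t k))"
  using factors assms unfolding sec_iso_iff_subquot_map by blast

lemma first_before_if_PG:
  assumes P: "M \<in> PG \<iota> G (\<theta> t0)"
  shows "t 1 < t0"
proof (rule ccontr)
  assume "\<not> t 1 < t0"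
  obtain X f where f: "subquot_map \<iota> M (mcar M) (Ms 1) X f" and W: "X \<in> WG \<iota> G (\<theta> (t 1))"
    using factor[of 1] length_pos top by auto
  have th: "theta_sec \<iota> (\<theta> r) M (mcar M) (Ms 1) = \<theta> r X" for r
    using M.theta_sec_eq[OF in_V_theta f M.submod_carrier] .
  have zero: "\<theta> (t 1) X = 0" using W by (simp add: WG_def DG_def)
  have "Ms 1 \<subset> Ms 0" using step_psubset[of 1] length_pos by simp
  then have M1: "strict_subobj \<iota> G M (Ms 1)" "Ms 1 \<noteq> mcar M"
    using strict length_pos top by auto
  have pos: "theta_sec \<iota> (\<theta> t0) M (mcar M) A > 0" if "strict_subobj \<iota> G M A" "A \<noteq> mcar M" for A
    using P PG_iff[OF M_in_G nonzero] that by blast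
  show False
  proof (cases "t0 = t 1")
    case True
    then show False using pos[OF M1] th zero by simp
  next
    case False
    have "theta_sec \<iota> (\<theta> t0) M (mcar M) A \<ge> 0" if "strict_subobj \<iota> G M A" for A
      using pos[OF that] M.theta_sec_self[OF in_V_theta M.submod_carrier]
      by (cases "A = mcar M") (auto intro: less_imp_le)
    moreover have "t0 < t 1" using False \<open>\<not> t 1 < t0\<close> by simp
    ultimately have "theta_sec \<iota> (\<theta> (t 1)) M (mcar M) (Ms 1) > 0"
      by (rule quotients_become_positive[OF M_in_G _ M1])
    then show False using th zero by simp
  qed
qed

lemma factor_quotient_positive:
  assumes k: "k \<in> {1..m}" and before: "t k < t0"
    and A: "strict_subobj \<iota> G M A" "Ms k \<subseteq> A" "\<not> Ms (k - 1) \<subseteq> A"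
  shows "theta_sec \<iota> (\<theta> t0) M (Ms (k - 1)) (Ms (k - 1) \<inter> A) > 0"
proof -
  let ?B = "Ms (k - 1)"
  obtain X f where f: "subquot_map \<iota> M ?B (Ms k) X f" and W: "X \<in> WG \<iota> G (\<theta> (t k))"
    using factor[OF k] .
  have Bst: "strict_subobj \<iota> G M ?B" and kst: "strict_subobj \<iota> G M (Ms k)"
    using strict k by auto
  have Bs: "is_submod M ?B" and ks: "is_submod M (Ms k)" and As: "is_submod M A"
    using Bst kst A(1) M.strict_subobj_submod by auto
  have kB: "Ms k \<subseteq> ?B" using step_psubset[OF k] by blast
  have XG: "X \<in> G" using W by (simp add: WG_def)
  interpret X: rmodule_tc \<iota> X G using rmodule_tc[OF XG] .
  have transport: "theta_sec \<iota> (\<theta> t0) X (mcar X) (f ` (?B \<inter> A)) =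
      theta_sec \<iota> (\<theta> t0) M ?B (?B \<inter> A)"
    using M.theta_sec_transport[OF in_V_theta f Bs M.submod_Int[OF Bs As] Bs] kB A(2)
      subquot_map_image[OF f] by auto
  have image_strict: "strict_subobj \<iota> G X (f ` (?B \<inter> A))"
    using M.strict_subobj_image[OF f Bst kst A(1,2)] .
  have image_proper: "f ` (?B \<inter> A) \<noteq> mcar X"
  proof
    assume eq: "f ` (?B \<inter> A) = mcar X"
    have "?B \<subseteq> A"
    proof
      fix v assume v: "v \<in> ?B"
      have "f v \<in> f ` (?B \<inter> A)" using subquot_map_in[OF f v] eq by simp
      then obtain a where a: "a \<in> ?B" "a \<in> A" "f v = f a" by blast
      then have "v - a \<in> A" using M.subquot_map_eq_iff[OF f Bs v] A(2) by blast
      then have "v - a + a \<in> A" using a(2) As unfolding is_submod_iff by blast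
      then show "v \<in> A" by simp
    qed
    then show False using A(3) by simp
  qed
  show ?thesis
    using quotients_become_positive[OF XG X.theta_sec_nonneg_of_WG[OF in_V_theta W]
        image_strict image_proper before] transport by simp
qed

lemma quotient_positive_if_contains_step:
  assumes before: "\<forall>k\<in>{1..m}. t k < t0" and k: "k \<le> m"
    and A: "strict_subobj \<iota> G M A" "Ms k \<subseteq> A" "A \<noteq> mcar M"
  shows "theta_sec \<iota> (\<theta> t0) M (mcar M) A > 0"
  using k A
proof (induction k arbitrary: A)
  case 0
  then have "A = mcar M" using top M.strict_subobj_submod[OF "0.prems"(2)] by (auto simp: is_submod_iff)
  then show ?case using "0.prems"(4) by simp
next
  case (Suc k)
  note A = Suc.prems(2-4)
  show ?case
  proof (cases "Ms k \<subseteq> A")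
    case True
    then show ?thesis using Suc by simp
  next
    case False
    have kst: "strict_subobj \<iota> G M (Ms k)" using strict Suc.prems(1) by simp
    have ks: "is_submod M (Ms k)" and As: "is_submod M A"
      using kst A(1) M.strict_subobj_submod by auto
    define S where "S = Ms k + A"
    have Sst: "strict_subobj \<iota> G M S" unfolding S_def using M.strict_subobj_set_plus[OF kst A(1)] .
    have kS: "Ms k \<subseteq> S" unfolding S_def using M.subset_set_plus_submod1[OF As] .
    have "theta_sec \<iota> (\<theta> t0) M (mcar M) A =
        theta_sec \<iota> (\<theta> t0) M (mcar M) S + theta_sec \<iota> (\<theta> t0) M (Ms k) (Ms k \<inter> A)"
      unfolding S_def using M.theta_sec_carrier_split[OF in_V_theta ks As] .
    moreover have "theta_sec \<iota> (\<theta> t0) M (mcar M) S \<ge> 0"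
    proof (cases "S = mcar M")
      case True
      then show ?thesis using M.theta_sec_self[OF in_V_theta M.submod_carrier] by simp
    next
      case False
      then show ?thesis using Suc.IH Suc.prems(1) Sst kS by (auto intro: less_imp_le)
    qed
    moreover have "theta_sec \<iota> (\<theta> t0) M (Ms k) (Ms k \<inter> A) > 0"
      using factor_quotient_positive[of "Suc k"] Suc.prems(1) before A(1,2) False by simp
    ultimately show ?thesis by simp
  qed
qed

lemma PG_if_all_before:
  assumes before: "\<forall>k\<in>{1..m}. t k < t0"
  shows "M \<in> PG \<iota> G (\<theta> t0)"
proof -
  have "theta_sec \<iota> (\<theta> t0) M (mcar M) A > 0"
    if A: "strict_subobj \<iota> G M A" "A \<noteq> mcar M" for A
  proof -
    have "Ms m \<subseteq> A" using bottom M.strict_subobj_submod[OF A(1)] by (simp add: is_submod_iff)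
    then show ?thesis using quotient_positive_if_contains_step[OF before order_refl A(1) _ A(2)] by simp
  qed
  then show ?thesis using PG_iff[OF M_in_G nonzero] by blast
qed

end

theorem mainTheorem20:
  fixes \<iota> :: "'k::field \<Rightarrow> 'l::ring_1"
    and G :: "('k, 'l) rmod set"
    and \<theta> :: "real \<Rightarrow> ('k, 'l) rmod \<Rightarrow> real"
    and t0 :: real and M :: "('k, 'l) rmod"
    and m :: nat and Ms :: "nat \<Rightarrow> (nat \<Rightarrow> 'k) set" and t :: "nat \<Rightarrow> real"
  assumes "fd_algebra \<iota>"
    and "torsion_class \<iota> G"
    and "smooth_green_path \<iota> G \<theta>"
    and "M \<in> G" and "nonzero_mod M"
    and "Ms 0 = mcar M" and "Ms m = {vzero}"
    and "\<forall>k\<in>{1..m}. Ms k \<subset> Ms (k - 1)"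
    and "\<forall>k\<le>m. strict_subobj \<iota> G M (Ms k)"
    and "\<forall>k\<in>{1..m}. \<exists>X. sec_iso \<iota> M (Ms (k - 1)) (Ms k) X \<and> X \<in> WG \<iota> G (\<theta> (t k))"
    and "\<forall>i j. 1 \<le> i \<longrightarrow> i < j \<longrightarrow> j \<le> m \<longrightarrow> t j < t i"
  shows "(M \<in> PG \<iota> G (\<theta> t0) \<longleftrightarrow> (\<forall>k\<in>{1..m}. t k < t0)) \<and>
         (M \<in> PG \<iota> G (\<theta> t0) \<longleftrightarrow> t 1 < t0)"
proof -
  interpret hn_filtration \<iota> G \<theta> M m Ms t
    by unfold_locales (fact assms)+
  have "M \<in> PG \<iota> G (\<theta> t0) \<longleftrightarrow> t 1 < t0"
    using first_before_if_PG PG_if_all_before all_before_iff_first_before by blast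
  then show ?thesis using all_before_iff_first_before by simp
qed

end
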